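(* Let $t\ge 2$. Every $(t,t)$AH-plane $\mathcal{K}$ is a sub-geometry of a $(t,t)$PH-plane: there exist a $(t,t)$PH-plane $\mathcal{H}$ and a line-neighbourhood $N$ of $\mathcal{H}$ such that the incidence structure obtained from $\mathcal{H}$ by deleting all lines in $N$ and all points incident with some line of $N$ (and restricting the remaining lines to the remaining points) is isomorphic to $\mathcal{K}$.
   Context: Projective Hjelmslev plane: an incidence structure $\mathcal{H}$ such that (1) any two points are incident with at least one line; (2) any two lines meet in at least one point; (3) two lines meeting in more than one point are called neighbours; (4) two points incident with more than one common line are called neighbours; (5) there is an incidence-preserving surjection $\phi$ from $\mathcal{H}$ onto an ordinary projective plane with $\phi(P)=\phi(Q)\iff P\sim Q$ for points and $\phi(g)=\phi(h)\iff g\sim h$ for lines (where $\sim$ is the neighbour relation, reflexively extended; it is an equivalence relation, whose classes on lines are called line-neighbourhoods). A $(t,r)$PH-plane is a projective Hjelmslev plane in which each line has $t(r+1)$ points and, for each point $P$ on a line $g$, exactly $t$ points of $g$ are neighbours of $P$ (including $P$). Affine Hjelmslev plane: an incidence structure such that any two points are incident with at least one line, lines meeting in more than one point are neighbours, points incident with more than one common line are neighbours, and there is an incidence-preserving surjection $\phi$ onto an ordinary affine plane with $\phi(P)=\phi(Q)\iff P\sim Q$, $\phi(g)=\phi(h)\iff g\sim h$, and lines with no common point mapped to parallel lines. A $(t,r)$AH-plane is an affine Hjelmslev plane in which each line has $rt$ points and, for each point $P$ on a line $g$, exactly $t$ points of $g$ are neighbours of $P$ (including $P$). *)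

theory Defs
  imports Main
begin

text \<open>Incidence structures are given by a point set P, a line set L and an
incidence predicate I (only its values on P x L matter).\<close>

definition collinear3 :: "'l set \<Rightarrow> ('p \<Rightarrow> 'l \<Rightarrow> bool) \<Rightarrow> 'p \<Rightarrow> 'p \<Rightarrow> 'p \<Rightarrow> bool" where
  "collinear3 L I a b c \<longleftrightarrow> (\<exists>g\<in>L. I a g \<and> I b g \<and> I c g)"

definition proj_plane :: "'p set \<Rightarrow> 'l set \<Rightarrow> ('p \<Rightarrow> 'l \<Rightarrow> bool) \<Rightarrow> bool" where
  "proj_plane P L I \<longleftrightarrow>
     (\<forall>p\<in>P. \<forall>q\<in>P. p \<noteq> q \<longrightarrow> (\<exists>!g. g \<in> L \<and> I p g \<and> I q g)) \<and>
     (\<forall>g\<in>L. \<forall>h\<in>L. g \<noteq> h \<longrightarrow> (\<exists>!p. p \<in> P \<and> I p g \<and> I p h)) \<and>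
     (\<exists>a\<in>P. \<exists>b\<in>P. \<exists>c\<in>P. \<exists>d\<in>P. distinct [a, b, c, d] \<and>
        \<not> collinear3 L I a b c \<and> \<not> collinear3 L I a b d \<and>
        \<not> collinear3 L I a c d \<and> \<not> collinear3 L I b c d)"

definition aff_parallel :: "'p set \<Rightarrow> ('p \<Rightarrow> 'l \<Rightarrow> bool) \<Rightarrow> 'l \<Rightarrow> 'l \<Rightarrow> bool" where
  "aff_parallel P I g h \<longleftrightarrow> g = h \<or> \<not> (\<exists>p\<in>P. I p g \<and> I p h)"

definition affine_plane :: "'p set \<Rightarrow> 'l set \<Rightarrow> ('p \<Rightarrow> 'l \<Rightarrow> bool) \<Rightarrow> bool" where
  "affine_plane P L I \<longleftrightarrow>
     (\<forall>p\<in>P. \<forall>q\<in>P. p \<noteq> q \<longrightarrow> (\<exists>!g. g \<in> L \<and> I p g \<and> I q g)) \<and>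
     (\<forall>p\<in>P. \<forall>g\<in>L. \<not> I p g \<longrightarrow> (\<exists>!h. h \<in> L \<and> I p h \<and> aff_parallel P I g h)) \<and>
     (\<exists>a\<in>P. \<exists>b\<in>P. \<exists>c\<in>P. distinct [a, b, c] \<and> \<not> collinear3 L I a b c)"

definition pt_nb :: "'p set \<Rightarrow> 'l set \<Rightarrow> ('p \<Rightarrow> 'l \<Rightarrow> bool) \<Rightarrow> 'p \<Rightarrow> 'p \<Rightarrow> bool" where
  "pt_nb P L I p q \<longleftrightarrow> p = q \<or>
     (\<exists>g\<in>L. \<exists>h\<in>L. g \<noteq> h \<and> I p g \<and> I q g \<and> I p h \<and> I q h)"

definition ln_nb :: "'p set \<Rightarrow> 'l set \<Rightarrow> ('p \<Rightarrow> 'l \<Rightarrow> bool) \<Rightarrow> 'l \<Rightarrow> 'l \<Rightarrow> bool" where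
  "ln_nb P L I g h \<longleftrightarrow> g = h \<or>
     (\<exists>p\<in>P. \<exists>q\<in>P. p \<noteq> q \<and> I p g \<and> I q g \<and> I p h \<and> I q h)"

text \<open>Projective Hjelmslev plane.  The image plane is taken with the same
point/line types (no loss of generality: the image of a surjection is no larger
than the domain).\<close>
definition PH_plane :: "'p set \<Rightarrow> 'l set \<Rightarrow> ('p \<Rightarrow> 'l \<Rightarrow> bool) \<Rightarrow> bool" where
  "PH_plane P L I \<longleftrightarrow>
     (\<forall>p\<in>P. \<forall>q\<in>P. \<exists>g\<in>L. I p g \<and> I q g) \<and>
     (\<forall>g\<in>L. \<forall>h\<in>L. \<exists>p\<in>P. I p g \<and> I p h) \<and>
     (\<exists>(P' :: 'p set) (L' :: 'l set) (I' :: 'p \<Rightarrow> 'l \<Rightarrow> bool)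
        (\<phi> :: 'p \<Rightarrow> 'p) (\<psi> :: 'l \<Rightarrow> 'l).
        proj_plane P' L' I' \<and> \<phi> ` P = P' \<and> \<psi> ` L = L' \<and>
        (\<forall>p\<in>P. \<forall>g\<in>L. I p g \<longrightarrow> I' (\<phi> p) (\<psi> g)) \<and>
        (\<forall>p\<in>P. \<forall>q\<in>P. \<phi> p = \<phi> q \<longleftrightarrow> pt_nb P L I p q) \<and>
        (\<forall>g\<in>L. \<forall>h\<in>L. \<psi> g = \<psi> h \<longleftrightarrow> ln_nb P L I g h))"

definition tr_PH_plane :: "nat \<Rightarrow> nat \<Rightarrow> 'p set \<Rightarrow> 'l set \<Rightarrow> ('p \<Rightarrow> 'l \<Rightarrow> bool) \<Rightarrow> bool" where
  "tr_PH_plane t r P L I \<longleftrightarrow> PH_plane P L I \<and>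
     (\<forall>g\<in>L. finite {p\<in>P. I p g} \<and> card {p\<in>P. I p g} = t * (r + 1)) \<and>
     (\<forall>g\<in>L. \<forall>p\<in>P. I p g \<longrightarrow> card {q\<in>P. I q g \<and> pt_nb P L I p q} = t)"

text \<open>The line-neighbour relation is the one induced
by the epimorphism (equal images); lines meeting in more than one point must be
neighbours, and lines without a common point are mapped to parallel lines.\<close>
definition AH_plane :: "'p set \<Rightarrow> 'l set \<Rightarrow> ('p \<Rightarrow> 'l \<Rightarrow> bool) \<Rightarrow> bool" where
  "AH_plane P L I \<longleftrightarrow>
     (\<forall>p\<in>P. \<forall>q\<in>P. \<exists>g\<in>L. I p g \<and> I q g) \<and>
     (\<exists>(P' :: 'p set) (L' :: 'l set) (I' :: 'p \<Rightarrow> 'l \<Rightarrow> bool)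
        (\<phi> :: 'p \<Rightarrow> 'p) (\<psi> :: 'l \<Rightarrow> 'l).
        affine_plane P' L' I' \<and> \<phi> ` P = P' \<and> \<psi> ` L = L' \<and>
        (\<forall>p\<in>P. \<forall>g\<in>L. I p g \<longrightarrow> I' (\<phi> p) (\<psi> g)) \<and>
        (\<forall>p\<in>P. \<forall>q\<in>P. \<phi> p = \<phi> q \<longleftrightarrow> pt_nb P L I p q) \<and>
        (\<forall>g\<in>L. \<forall>h\<in>L. ln_nb P L I g h \<longrightarrow> \<psi> g = \<psi> h) \<and>
        (\<forall>g\<in>L. \<forall>h\<in>L. \<not> (\<exists>p\<in>P. I p g \<and> I p h) \<longrightarrow> aff_parallel P' I' (\<psi> g) (\<psi> h)))"

definition tr_AH_plane :: "nat \<Rightarrow> nat \<Rightarrow> 'p set \<Rightarrow> 'l set \<Rightarrow> ('p \<Rightarrow> 'l \<Rightarrow> bool) \<Rightarrow> bool" where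
  "tr_AH_plane t r P L I \<longleftrightarrow> AH_plane P L I \<and>
     (\<forall>g\<in>L. finite {p\<in>P. I p g} \<and> card {p\<in>P. I p g} = r * t) \<and>
     (\<forall>g\<in>L. \<forall>p\<in>P. I p g \<longrightarrow> card {q\<in>P. I q g \<and> pt_nb P L I p q} = t)"

definition line_nbhd :: "'p set \<Rightarrow> 'l set \<Rightarrow> ('p \<Rightarrow> 'l \<Rightarrow> bool) \<Rightarrow> 'l set \<Rightarrow> bool" where
  "line_nbhd P L I N \<longleftrightarrow> (\<exists>g\<in>L. N = {h\<in>L. ln_nb P L I g h})"

definition inc_iso :: "'p set \<Rightarrow> 'l set \<Rightarrow> ('p \<Rightarrow> 'l \<Rightarrow> bool) \<Rightarrow>
    'q set \<Rightarrow> 'm set \<Rightarrow> ('q \<Rightarrow> 'm \<Rightarrow> bool) \<Rightarrow> bool" where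
  "inc_iso P L I P2 L2 I2 \<longleftrightarrow> (\<exists>\<alpha> \<beta>. bij_betw \<alpha> P P2 \<and> bij_betw \<beta> L L2 \<and>
     (\<forall>p\<in>P. \<forall>g\<in>L. I p g \<longleftrightarrow> I2 (\<alpha> p) (\<beta> g)))"

end

theory Submission
  imports Defs
begin

text \<open>Let \<open>\<phi>, \<psi>\<close> be the epimorphism of the $(t,t)$AH-plane \<open>K\<close> onto the affine plane \<open>A\<close>,
  which then has order \<open>t\<close>. Counting shows that every neighbour class of points of \<open>K\<close> has
  \<open>t\<^sup>2\<close> elements and that the lines of \<open>K\<close> over an affine line \<open>m\<close> fall into \<open>t\<close> classes of
  pairwise disjoint lines, each class covering every point over \<open>m\<close> exactly once.

  The extension adds a point \<open>(d, a)\<close> for every parallel class \<open>d\<close> and every point \<open>a\<close> of \<open>A\<close>,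
  and a line \<open>n\<close> for every point \<open>n\<close> of \<open>A\<close>. The point \<open>(d, a)\<close> lies on the new line \<open>n\<close> iff \<open>a\<close>
  lies on the line of class \<open>d\<close> through \<open>n\<close>, and on an old line \<open>g\<close> iff \<open>d\<close> is the class of
  \<open>\<psi> g\<close> and \<open>a\<close> lies on the affine line \<open>far_line g\<close>. Here the lines \<open>m\<close> of a class \<open>d\<close> are sent
  to pairwise different classes \<open>d' \<noteq> d\<close>, and the \<open>t\<close> disjointness classes over \<open>m\<close> are sent
  bijectively to the \<open>t\<close> lines of class \<open>d'\<close>. The new lines then form a single neighbourhood,
  and \<open>\<phi>, \<psi>\<close> extend to an epimorphism onto the projective closure of \<open>A\<close> that sends every new
  line to the line at infinity.\<close>

lemma card_eq_mult_card_image: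
  assumes "finite S" "\<And>y. y \<in> f ` S \<Longrightarrow> card {x\<in>S. f x = y} = k"
  shows "card S = k * card (f ` S)"
proof -
  have S: "S = (\<Union>y\<in>f ` S. {x\<in>S. f x = y})" by auto
  have "card S = (\<Sum>y\<in>f ` S. card {x\<in>S. f x = y})"
    by (subst S, rule card_UN_disjoint) (use assms in auto)
  also have "\<dots> = (\<Sum>y\<in>f ` S. k)" using assms(2) by (rule sum.cong[OF refl])
  finally show ?thesis by simp
qed

lemma two_elements_if_card_ge_2:
  assumes "2 \<le> card S" shows "\<exists>a b. a \<noteq> b \<and> a \<in> S \<and> b \<in> S"
  using assms by (auto simp: numeral_2_eq_2 le_Suc_eq card_le_Suc_iff)

lemma other_element_if_card_ge_2:
  assumes "2 \<le> card S" shows "\<exists>y\<in>S. y \<noteq> x"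
  using two_elements_if_card_ge_2[OF assms] by metis

text \<open>In a set \<open>F\<close> of \<open>t\<^sup>2\<close> elements, \<open>t\<close> blocks of size \<open>t\<close> through \<open>P\<close> that pairwise
  meet only in \<open>P\<close> leave exactly \<open>t - 1\<close> elements uncovered; so there is only one \<open>t\<close>-set
  through \<open>P\<close> meeting every block only in \<open>P\<close>.\<close>
lemma transversal_eq_complement:
  fixes blk :: "'i \<Rightarrow> 'p set"
  assumes F: "finite F" "card F = t * t" and I: "finite I" "card I = t" "t \<ge> 1"
    and blk: "\<And>i. i \<in> I \<Longrightarrow> P \<in> blk i \<and> blk i \<subseteq> F \<and> card (blk i) = t"
    and disj: "\<And>i j. i \<in> I \<Longrightarrow> j \<in> I \<Longrightarrow> i \<noteq> j \<Longrightarrow> blk i \<inter> blk j = {P}"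
    and B: "B \<subseteq> F" "card B = t" "P \<in> B" "\<And>i. i \<in> I \<Longrightarrow> B \<inter> blk i \<subseteq> {P}"
  shows "B = insert P (F - (\<Union>i\<in>I. blk i))"
proof -
  define U where "U = (\<Union>i\<in>I. blk i)"
  have UP: "U - {P} = (\<Union>i\<in>I. blk i - {P})" by (auto simp: U_def)
  have finb: "\<And>i. i \<in> I \<Longrightarrow> finite (blk i)" using blk F finite_subset by blast
  have "card (U - {P}) = (\<Sum>i\<in>I. card (blk i - {P}))"
    unfolding UP by (rule card_UN_disjoint) (use I finb disj in auto)
  also have "\<dots> = (\<Sum>i\<in>I. t - 1)" using blk by (intro sum.cong) auto
  finally have cU: "card (U - {P}) = t * (t - 1)" using I by simp
  have "I \<noteq> {}" using I by auto
  then have PU: "P \<in> U" using blk by (auto simp: U_def)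
  have UF: "U \<subseteq> F" using blk by (auto simp: U_def)
  have finU: "finite U" using UF F finite_subset by blast
  have cU2: "card U = t * (t - 1) + 1"
    using cU PU finU by (metis card_Diff_singleton Suc_eq_plus1 card_Suc_Diff1)
  have "card (F - U) = t * t - (t * (t - 1) + 1)" using card_Diff_subset[OF finU UF] F cU2 by simp
  also have "\<dots> = t - 1" using I(3) by (cases t) (auto simp: algebra_simps)
  finally have "card (insert P (F - U)) = t" using PU F(1) I(3) by simp
  moreover have "B \<subseteq> insert P (F - U)" using B by (auto simp: U_def)
  moreover have "finite (insert P (F - U))" using F by simp
  ultimately have "B = insert P (F - U)" using card_subset_eq B(2) by metis
  then show ?thesis by (simp add: U_def)
qed

lemma card_Inl_Un_Inr: "finite S \<Longrightarrow> finite T \<Longrightarrow> card (Inl ` S \<union> Inr ` T) = card S + card T"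
  by (subst card_Un_disjoint) (auto simp: card_image)

lemma inj_on_map_sum_id:
  assumes "inj_on e B" shows "inj_on (map_sum id e) (Inl ` X \<union> Inr ` B)"
proof (rule inj_onI)
  fix x y assume "x \<in> Inl ` X \<union> Inr ` B" "y \<in> Inl ` X \<union> Inr ` B" "map_sum id e x = map_sum id e y"
  then show "x = y" using assms by (auto dest: inj_onD)
qed


section \<open>Incidence structures and their isomorphic copies\<close>

lemma pt_nb_sym: "pt_nb P L I x y \<longleftrightarrow> pt_nb P L I y x" unfolding pt_nb_def by blast

lemma ln_nb_sym: "ln_nb P L I x y \<longleftrightarrow> ln_nb P L I y x" unfolding ln_nb_def by blast

lemma ex1_bij_transfer:
  assumes "bij_betw \<tau> L2 L1" "\<exists>!h. h \<in> L1 \<and> Q h" "\<And>g. g \<in> L2 \<Longrightarrow> R g \<longleftrightarrow> Q (\<tau> g)"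
  shows "\<exists>!g. g \<in> L2 \<and> R g"
proof -
  obtain h where h: "h \<in> L1" "Q h" and hu: "\<And>h'. h' \<in> L1 \<Longrightarrow> Q h' \<Longrightarrow> h' = h"
    using assms(2) by blast
  obtain g where g: "g \<in> L2" "\<tau> g = h" using assms(1) h(1) by (auto simp: bij_betw_def)
  show ?thesis
  proof (rule ex1I[of _ g])
    show "g \<in> L2 \<and> R g" using g h assms(3) by simp
    fix g' assume "g' \<in> L2 \<and> R g'"
    then have "\<tau> g' = \<tau> g" using hu assms(1,3) g by (auto simp: bij_betw_def)
    then show "g' = g" using assms(1) g \<open>g' \<in> L2 \<and> R g'\<close> by (auto simp: bij_betw_def inj_on_def)
  qed
qed

lemma collinear3_bij_transfer:
  assumes "bij_betw \<tau> L2 L1" "\<And>x g. x \<in> P2 \<Longrightarrow> g \<in> L2 \<Longrightarrow> I2 x g \<longleftrightarrow> I1 (\<sigma> x) (\<tau> g)"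
    and "x \<in> P2" "y \<in> P2" "z \<in> P2"
  shows "collinear3 L2 I2 x y z \<longleftrightarrow> collinear3 L1 I1 (\<sigma> x) (\<sigma> y) (\<sigma> z)"
proof
  assume "collinear3 L2 I2 x y z"
  then obtain g where "g \<in> L2" "I2 x g" "I2 y g" "I2 z g" by (auto simp: collinear3_def)
  then show "collinear3 L1 I1 (\<sigma> x) (\<sigma> y) (\<sigma> z)"
    using assms(1,2) assms(3-5) unfolding collinear3_def bij_betw_def by blast
next
  assume "collinear3 L1 I1 (\<sigma> x) (\<sigma> y) (\<sigma> z)"
  then obtain h where h: "h \<in> L1" "I1 (\<sigma> x) h" "I1 (\<sigma> y) h" "I1 (\<sigma> z) h"
    by (auto simp: collinear3_def)
  then obtain g where "g \<in> L2" "\<tau> g = h" using assms(1) by (auto simp: bij_betw_def)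
  then show "collinear3 L2 I2 x y z" using assms(2-5) h unfolding collinear3_def by blast
qed

lemma proj_plane_transfer:
  assumes pp: "proj_plane P1 L1 I1" and bP: "bij_betw \<sigma> P2 P1" and bL: "bij_betw \<tau> L2 L1"
    and inc: "\<And>x g. x \<in> P2 \<Longrightarrow> g \<in> L2 \<Longrightarrow> I2 x g \<longleftrightarrow> I1 (\<sigma> x) (\<tau> g)"
  shows "proj_plane P2 L2 I2"
proof -
  note ax = pp[unfolded proj_plane_def]
  have \<sigma>: "inj_on \<sigma> P2" "\<sigma> ` P2 = P1" and \<tau>: "inj_on \<tau> L2" "\<tau> ` L2 = L1"
    using bP bL by (auto simp: bij_betw_def)
  have "\<exists>!g. g \<in> L2 \<and> I2 p g \<and> I2 q g" if "p \<in> P2" "q \<in> P2" "p \<noteq> q" for p q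
  proof (rule ex1_bij_transfer[OF bL])
    have "\<sigma> p \<in> P1" "\<sigma> q \<in> P1" "\<sigma> p \<noteq> \<sigma> q" using that \<sigma> inj_onD by fastforce+
    then show "\<exists>!h. h \<in> L1 \<and> I1 (\<sigma> p) h \<and> I1 (\<sigma> q) h" using conjunct1[OF ax] by blast
  qed (use inc that in auto)
  moreover have "\<exists>!p. p \<in> P2 \<and> I2 p g \<and> I2 p h" if "g \<in> L2" "h \<in> L2" "g \<noteq> h" for g h
  proof (rule ex1_bij_transfer[OF bP])
    have "\<tau> g \<in> L1" "\<tau> h \<in> L1" "\<tau> g \<noteq> \<tau> h" using that \<tau> inj_onD by fastforce+
    then show "\<exists>!p. p \<in> P1 \<and> I1 p (\<tau> g) \<and> I1 p (\<tau> h)" using conjunct1[OF conjunct2[OF ax]] by blast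
  qed (use inc that in auto)
  moreover have "\<exists>a\<in>P2. \<exists>b\<in>P2. \<exists>c\<in>P2. \<exists>d\<in>P2. distinct [a, b, c, d] \<and>
      \<not> collinear3 L2 I2 a b c \<and> \<not> collinear3 L2 I2 a b d \<and>
      \<not> collinear3 L2 I2 a c d \<and> \<not> collinear3 L2 I2 b c d"
  proof -
    obtain a b c d where abcd: "a\<in>P1" "b\<in>P1" "c\<in>P1" "d\<in>P1" "distinct [a, b, c, d]"
        "\<not> collinear3 L1 I1 a b c" "\<not> collinear3 L1 I1 a b d"
        "\<not> collinear3 L1 I1 a c d" "\<not> collinear3 L1 I1 b c d"
      using conjunct2[OF conjunct2[OF ax]] by blast
    define a' where "a' = inv_into P2 \<sigma> a"
    define b' where "b' = inv_into P2 \<sigma> b"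
    define c' where "c' = inv_into P2 \<sigma> c"
    define d' where "d' = inv_into P2 \<sigma> d"
    have pre: "a' \<in> P2" "b' \<in> P2" "c' \<in> P2" "d' \<in> P2"
        "\<sigma> a' = a" "\<sigma> b' = b" "\<sigma> c' = c" "\<sigma> d' = d"
      unfolding a'_def b'_def c'_def d'_def using abcd(1-4) \<sigma>(2)
      by (auto simp: inv_into_into f_inv_into_f)
    have col: "collinear3 L2 I2 x y z \<longleftrightarrow> collinear3 L1 I1 (\<sigma> x) (\<sigma> y) (\<sigma> z)"
      if "x \<in> P2" "y \<in> P2" "z \<in> P2" for x y z
      using bL inc that by (rule collinear3_bij_transfer)
    have "distinct [a', b', c', d']" using abcd(5) pre by auto
    moreover have "\<not> collinear3 L2 I2 a' b' c'" "\<not> collinear3 L2 I2 a' b' d'"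
        "\<not> collinear3 L2 I2 a' c' d'" "\<not> collinear3 L2 I2 b' c' d'"
      using col pre abcd by simp_all
    ultimately show ?thesis using pre(1-4) by blast
  qed
  ultimately show ?thesis unfolding proj_plane_def by blast
qed

text \<open>The image plane in \<open>PH_plane\<close> must live on the point and line types of the
  plane itself; an epimorphism onto a projective plane of arbitrary type suffices, since
  choosing a representative of every neighbour class gives an isomorphic copy inside.\<close>
lemma PH_planeI:
  fixes P :: "'p set" and L :: "'l set" and P' :: "'x set" and L' :: "'y set"
  assumes join: "\<forall>p\<in>P. \<forall>q\<in>P. \<exists>g\<in>L. I p g \<and> I q g"
    and meet: "\<forall>g\<in>L. \<forall>h\<in>L. \<exists>p\<in>P. I p g \<and> I p h"
    and pp: "proj_plane P' L' I'" and onto: "\<phi> ` P = P'" "\<psi> ` L = L'"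
    and inc: "\<And>p g. p \<in> P \<Longrightarrow> g \<in> L \<Longrightarrow> I p g \<Longrightarrow> I' (\<phi> p) (\<psi> g)"
    and pt: "\<And>p q. p \<in> P \<Longrightarrow> q \<in> P \<Longrightarrow> \<phi> p = \<phi> q \<longleftrightarrow> pt_nb P L I p q"
    and ln: "\<And>g h. g \<in> L \<Longrightarrow> h \<in> L \<Longrightarrow> \<psi> g = \<psi> h \<longleftrightarrow> ln_nb P L I g h"
  shows "PH_plane P L I"
proof -
  define \<phi>0 where "\<phi>0 p = inv_into P \<phi> (\<phi> p)" for p
  define \<psi>0 where "\<psi>0 g = inv_into L \<psi> (\<psi> g)" for g
  have \<phi>0: "\<phi>0 p \<in> P" "\<phi> (\<phi>0 p) = \<phi> p" if "p \<in> P" for p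
    using that by (simp_all add: \<phi>0_def inv_into_into f_inv_into_f)
  have \<psi>0: "\<psi>0 g \<in> L" "\<psi> (\<psi>0 g) = \<psi> g" if "g \<in> L" for g
    using that by (simp_all add: \<psi>0_def inv_into_into f_inv_into_f)
  have \<phi>0_eq: "\<phi>0 p = \<phi>0 q \<longleftrightarrow> \<phi> p = \<phi> q" if "p \<in> P" "q \<in> P" for p q
    using \<phi>0 that by (metis \<phi>0_def)
  have \<psi>0_eq: "\<psi>0 g = \<psi>0 h \<longleftrightarrow> \<psi> g = \<psi> h" if "g \<in> L" "h \<in> L" for g h
    using \<psi>0 that by (metis \<psi>0_def)
  have bP: "bij_betw \<phi> (\<phi>0 ` P) P'"
  proof (rule bij_betw_imageI)
    show "inj_on \<phi> (\<phi>0 ` P)" using \<phi>0_eq \<phi>0 by (auto simp: inj_on_def)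
    show "\<phi> ` \<phi>0 ` P = P'" using \<phi>0 onto(1) by (auto simp: image_image)
  qed
  have bL: "bij_betw \<psi> (\<psi>0 ` L) L'"
  proof (rule bij_betw_imageI)
    show "inj_on \<psi> (\<psi>0 ` L)" using \<psi>0_eq \<psi>0 by (auto simp: inj_on_def)
    show "\<psi> ` \<psi>0 ` L = L'" using \<psi>0 onto(2) by (auto simp: image_image)
  qed
  have "proj_plane (\<phi>0 ` P) (\<psi>0 ` L) (\<lambda>x g. I' (\<phi> x) (\<psi> g))"
    by (rule proj_plane_transfer[OF pp bP bL]) simp
  moreover have "\<forall>p\<in>P. \<forall>g\<in>L. I p g \<longrightarrow> I' (\<phi> (\<phi>0 p)) (\<psi> (\<psi>0 g))"
    using inc \<phi>0 \<psi>0 by simp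
  ultimately show ?thesis
    unfolding PH_plane_def using join meet pt ln \<phi>0_eq \<psi>0_eq
    by (intro conjI exI[of _ "\<phi>0 ` P"] exI[of _ "\<psi>0 ` L"] exI[of _ "\<lambda>x g. I' (\<phi> x) (\<psi> g)"]
        exI[of _ \<phi>0] exI[of _ \<psi>0]) auto
qed


locale incidence_transfer =
  fixes P1 :: "'p set" and L1 :: "'l set" and I1 :: "'p \<Rightarrow> 'l \<Rightarrow> bool"
    and \<alpha> :: "'p \<Rightarrow> 'q" and \<beta> :: "'l \<Rightarrow> 'm"
  assumes inj_\<alpha>: "inj_on \<alpha> P1" and inj_\<beta>: "inj_on \<beta> L1"
begin

definition "P2 = \<alpha> ` P1"
definition "L2 = \<beta> ` L1"
definition "I2 x g = I1 (inv_into P1 \<alpha> x) (inv_into L1 \<beta> g)"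

lemma I2_image [simp]: "p \<in> P1 \<Longrightarrow> g \<in> L1 \<Longrightarrow> I2 (\<alpha> p) (\<beta> g) = I1 p g"
  by (simp add: I2_def inj_\<alpha> inj_\<beta>)

lemma pt_nb_image:
  assumes "p \<in> P1" "q \<in> P1" shows "pt_nb P2 L2 I2 (\<alpha> p) (\<alpha> q) \<longleftrightarrow> pt_nb P1 L1 I1 p q"
proof -
  have "\<alpha> p = \<alpha> q \<longleftrightarrow> p = q" using inj_\<alpha> assms inj_on_eq_iff by metis
  moreover have "(\<exists>g\<in>L1. \<exists>h\<in>L1. \<beta> g \<noteq> \<beta> h \<and> I1 p g \<and> I1 q g \<and> I1 p h \<and> I1 q h)
      \<longleftrightarrow> (\<exists>g\<in>L1. \<exists>h\<in>L1. g \<noteq> h \<and> I1 p g \<and> I1 q g \<and> I1 p h \<and> I1 q h)"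
    using inj_\<beta> by (metis inj_on_eq_iff)
  ultimately show ?thesis using assms unfolding pt_nb_def L2_def by auto
qed

lemma ln_nb_image:
  assumes "g \<in> L1" "h \<in> L1" shows "ln_nb P2 L2 I2 (\<beta> g) (\<beta> h) \<longleftrightarrow> ln_nb P1 L1 I1 g h"
proof -
  have "\<beta> g = \<beta> h \<longleftrightarrow> g = h" using inj_\<beta> assms inj_on_eq_iff by metis
  moreover have "(\<exists>p\<in>P1. \<exists>q\<in>P1. \<alpha> p \<noteq> \<alpha> q \<and> I1 p g \<and> I1 q g \<and> I1 p h \<and> I1 q h)
      \<longleftrightarrow> (\<exists>p\<in>P1. \<exists>q\<in>P1. p \<noteq> q \<and> I1 p g \<and> I1 q g \<and> I1 p h \<and> I1 q h)"
    using inj_\<alpha> by (metis inj_on_eq_iff)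
  ultimately show ?thesis using assms unfolding ln_nb_def P2_def by auto
qed

lemma PH_plane_image:
  assumes "PH_plane P1 L1 I1" shows "PH_plane P2 L2 I2"
proof -
  obtain P' :: "'p set" and L' :: "'l set" and I' \<phi> \<psi> where pp: "proj_plane P' L' I'"
    and onto: "\<phi> ` P1 = P'" "\<psi> ` L1 = L'"
    and inc: "\<forall>p\<in>P1. \<forall>g\<in>L1. I1 p g \<longrightarrow> I' (\<phi> p) (\<psi> g)"
    and pt: "\<forall>p\<in>P1. \<forall>q\<in>P1. \<phi> p = \<phi> q \<longleftrightarrow> pt_nb P1 L1 I1 p q"
    and ln: "\<forall>g\<in>L1. \<forall>h\<in>L1. \<psi> g = \<psi> h \<longleftrightarrow> ln_nb P1 L1 I1 g h"
    using assms unfolding PH_plane_def by blast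
  have join: "\<forall>p\<in>P1. \<forall>q\<in>P1. \<exists>g\<in>L1. I1 p g \<and> I1 q g"
    and meet: "\<forall>g\<in>L1. \<forall>h\<in>L1. \<exists>p\<in>P1. I1 p g \<and> I1 p h"
    using assms unfolding PH_plane_def by blast+
  have inv_\<alpha>: "inv_into P1 \<alpha> (\<alpha> p) = p" if "p \<in> P1" for p using that inj_\<alpha> by simp
  have inv_\<beta>: "inv_into L1 \<beta> (\<beta> g) = g" if "g \<in> L1" for g using that inj_\<beta> by simp
  show ?thesis
  proof (rule PH_planeI[OF _ _ pp, where \<phi> = "\<phi> \<circ> inv_into P1 \<alpha>" and \<psi> = "\<psi> \<circ> inv_into L1 \<beta>"])
    show "\<forall>p\<in>P2. \<forall>q\<in>P2. \<exists>g\<in>L2. I2 p g \<and> I2 q g"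
      using join unfolding P2_def L2_def by fastforce
    show "\<forall>g\<in>L2. \<forall>h\<in>L2. \<exists>p\<in>P2. I2 p g \<and> I2 p h"
      using meet unfolding P2_def L2_def by fastforce
    show "(\<phi> \<circ> inv_into P1 \<alpha>) ` P2 = P'" "(\<psi> \<circ> inv_into L1 \<beta>) ` L2 = L'"
      using onto inv_\<alpha> inv_\<beta> by (auto simp: P2_def L2_def image_image)
  qed (use inc pt ln inv_\<alpha> inv_\<beta> pt_nb_image ln_nb_image in \<open>auto simp: P2_def L2_def\<close>)
qed

lemma tr_PH_plane_image:
  assumes "tr_PH_plane t r P1 L1 I1" shows "tr_PH_plane t r P2 L2 I2"
proof -
  have line_pts: "{x\<in>P2. I2 x (\<beta> g)} = \<alpha> ` {p\<in>P1. I1 p g}" if "g \<in> L1" for g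
    using that by (auto simp: P2_def)
  have nb_pts: "{y\<in>P2. I2 y (\<beta> g) \<and> pt_nb P2 L2 I2 (\<alpha> p) y}
      = \<alpha> ` {q\<in>P1. I1 q g \<and> pt_nb P1 L1 I1 p q}" if "g \<in> L1" "p \<in> P1" for g p
    using that pt_nb_image by (auto simp: P2_def)
  have card_\<alpha>: "card (\<alpha> ` S) = card S" if "S \<subseteq> P1" for S
    using that inj_\<alpha> by (meson card_image inj_on_subset)
  have "finite {p\<in>P2. I2 p g} \<and> card {p\<in>P2. I2 p g} = t * (r + 1)" if "g \<in> L2" for g
    using that assms line_pts card_\<alpha> unfolding tr_PH_plane_def L2_def by auto
  moreover have "card {q\<in>P2. I2 q g \<and> pt_nb P2 L2 I2 p q} = t"
    if "g \<in> L2" "p \<in> P2" "I2 p g" for g p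
    using that assms nb_pts card_\<alpha> unfolding tr_PH_plane_def L2_def P2_def by auto
  ultimately show ?thesis
    using PH_plane_image assms unfolding tr_PH_plane_def by blast
qed

lemma line_nbhd_image:
  assumes "line_nbhd P1 L1 I1 N" shows "line_nbhd P2 L2 I2 (\<beta> ` N)"
proof -
  obtain g where g: "g \<in> L1" "N = {h\<in>L1. ln_nb P1 L1 I1 g h}"
    using assms unfolding line_nbhd_def by blast
  then have "\<beta> ` N = {h\<in>L2. ln_nb P2 L2 I2 (\<beta> g) h}" using ln_nb_image by (auto simp: L2_def)
  moreover have "\<beta> g \<in> L2" using g by (simp add: L2_def)
  ultimately show ?thesis unfolding line_nbhd_def by blast
qed

lemma points_off_image:
  assumes "N \<subseteq> L1"
  shows "{p\<in>P2. \<forall>g\<in>\<beta> ` N. \<not> I2 p g} = \<alpha> ` {p\<in>P1. \<forall>g\<in>N. \<not> I1 p g}"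
  using assms by (auto simp: P2_def subset_iff)

lemma lines_off_image:
  assumes "N \<subseteq> L1" shows "L2 - \<beta> ` N = \<beta> ` (L1 - N)"
  using assms inj_\<beta> by (auto simp: L2_def inj_on_eq_iff)

lemma inc_iso_image:
  assumes "S \<subseteq> P1" "M \<subseteq> L1" and "inc_iso S M I1 P L I"
  shows "inc_iso (\<alpha> ` S) (\<beta> ` M) I2 P L I"
proof -
  obtain a b where ab: "bij_betw a S P" "bij_betw b M L" "\<forall>p\<in>S. \<forall>g\<in>M. I1 p g \<longleftrightarrow> I (a p) (b g)"
    using assms(3) unfolding inc_iso_def by blast
  have bA: "bij_betw \<alpha> S (\<alpha> ` S)" and bB: "bij_betw \<beta> M (\<beta> ` M)"
    using inj_\<alpha> inj_\<beta> assms(1,2) inj_on_subset by (auto simp: bij_betw_def)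
  have "bij_betw (a \<circ> inv_into S \<alpha>) (\<alpha> ` S) P"
    using bij_betw_inv_into[OF bA] ab(1) bij_betw_trans by blast
  moreover have "bij_betw (b \<circ> inv_into M \<beta>) (\<beta> ` M) L"
    using bij_betw_inv_into[OF bB] ab(2) bij_betw_trans by blast
  moreover have "\<forall>x\<in>\<alpha> ` S. \<forall>y\<in>\<beta> ` M. I2 x y \<longleftrightarrow> I ((a \<circ> inv_into S \<alpha>) x) ((b \<circ> inv_into M \<beta>) y)"
    using ab(3) bA bB assms(1,2) by (auto simp: bij_betw_def subset_iff)
  ultimately show ?thesis unfolding inc_iso_def by blast
qed


lemma extension_image:
  assumes "tr_PH_plane t r P1 L1 I1" "line_nbhd P1 L1 I1 N"
    and "inc_iso {p\<in>P1. \<forall>g\<in>N. \<not> I1 p g} (L1 - N) I1 P L I"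
  shows "tr_PH_plane t r P2 L2 I2 \<and> line_nbhd P2 L2 I2 (\<beta> ` N) \<and>
    inc_iso {p\<in>P2. \<forall>g\<in>\<beta> ` N. \<not> I2 p g} (L2 - \<beta> ` N) I2 P L I"
proof -
  have N: "N \<subseteq> L1" using assms(2) by (auto simp: line_nbhd_def)
  show ?thesis
    unfolding points_off_image[OF N] lines_off_image[OF N]
    using tr_PH_plane_image[OF assms(1)] line_nbhd_image[OF assms(2)] inc_iso_image[OF _ _ assms(3)]
    by blast
qed
end


section \<open>Affine planes and their projective closure\<close>

locale affine_incidence =
  fixes A :: "'p set" and AL :: "'l set" and AI :: "'p \<Rightarrow> 'l \<Rightarrow> bool"
  assumes affine: "affine_plane A AL AI"
begin

definition "apts m = {x\<in>A. AI x m}"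
definition "apar m h \<longleftrightarrow> aff_parallel A AI m h"
definition "join x y = (SOME m. m \<in> AL \<and> AI x m \<and> AI y m)"
definition "parl x m = (THE h. h \<in> AL \<and> AI x h \<and> apar m h)"
definition "dir m = {h\<in>AL. apar m h}"
definition "Dirs = dir ` AL"
definition "dline d x = parl x (SOME m. m \<in> d)"

lemma line_eq_if_two_common_points:
  "x \<in> A \<Longrightarrow> y \<in> A \<Longrightarrow> x \<noteq> y \<Longrightarrow> m \<in> AL \<Longrightarrow> h \<in> AL \<Longrightarrow>
    AI x m \<Longrightarrow> AI y m \<Longrightarrow> AI x h \<Longrightarrow> AI y h \<Longrightarrow> m = h"
  using affine unfolding affine_plane_def by metis

lemma exists_triangle: "\<exists>a\<in>A. \<exists>b\<in>A. \<exists>c\<in>A. distinct [a, b, c] \<and> \<not> collinear3 AL AI a b c"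
  using affine unfolding affine_plane_def by blast

lemma exists_point: "\<exists>a. a \<in> A"
  using exists_triangle by blast

lemma exists_point_off_line: "m \<in> AL \<Longrightarrow> \<exists>y\<in>A. \<not> AI y m"
  using exists_triangle unfolding collinear3_def by blast

lemma apar_refl: "apar m m" by (simp add: apar_def aff_parallel_def)

lemma apar_sym: "apar m h \<Longrightarrow> apar h m" by (auto simp: apar_def aff_parallel_def)

lemma apar_eq_if_common_point: "apar m h \<Longrightarrow> x \<in> A \<Longrightarrow> AI x m \<Longrightarrow> AI x h \<Longrightarrow> m = h"
  by (auto simp: apar_def aff_parallel_def)

lemma ex1_parallel_through: "x \<in> A \<Longrightarrow> m \<in> AL \<Longrightarrow> \<exists>!h. h \<in> AL \<and> AI x h \<and> apar m h"
proof (cases "AI x m")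
  case True
  assume "x \<in> A" "m \<in> AL"
  then show ?thesis using True apar_eq_if_common_point by (intro ex1I[of _ m]) (auto simp: apar_refl)
next
  case False
  assume "x \<in> A" "m \<in> AL"
  then show ?thesis using affine False unfolding affine_plane_def apar_def by blast
qed

lemma apar_trans:
  assumes "m \<in> AL" "h \<in> AL" "k \<in> AL" "apar m h" "apar h k" shows "apar m k"
proof (rule ccontr)
  assume "\<not> apar m k"
  then obtain x where x: "x \<in> A" "AI x m" "AI x k" "m \<noteq> k"
    by (auto simp: apar_def aff_parallel_def)
  have "apar h m" "apar h k" using assms apar_sym by auto
  then show False using ex1_parallel_through[OF x(1) assms(2)] x assms by blast
qed

lemma ex1_meet_if_not_apar:
  assumes "m \<in> AL" "h \<in> AL" "\<not> apar m h"
  shows "\<exists>!x. x \<in> A \<and> AI x m \<and> AI x h"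
proof -
  obtain x where x: "x \<in> A" "AI x m" "AI x h" using assms by (auto simp: apar_def aff_parallel_def)
  have "m \<noteq> h" using assms apar_refl by auto
  then show ?thesis using x line_eq_if_two_common_points assms by blast
qed

lemma join:
  assumes "x \<in> A" "y \<in> A" "x \<noteq> y" shows "join x y \<in> AL \<and> AI x (join x y) \<and> AI y (join x y)"
proof -
  have "\<exists>m. m \<in> AL \<and> AI x m \<and> AI y m" using affine assms unfolding affine_plane_def by metis
  then show ?thesis unfolding join_def by (rule someI_ex)
qed

lemma join_unique:
  "x \<in> A \<Longrightarrow> y \<in> A \<Longrightarrow> x \<noteq> y \<Longrightarrow> m \<in> AL \<Longrightarrow> AI x m \<Longrightarrow> AI y m \<Longrightarrow> join x y = m"
  using join line_eq_if_two_common_points by metis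

lemma join_commute: "x \<in> A \<Longrightarrow> y \<in> A \<Longrightarrow> x \<noteq> y \<Longrightarrow> join x y = join y x"
  using join join_unique by metis

lemma parl: "x \<in> A \<Longrightarrow> m \<in> AL \<Longrightarrow> parl x m \<in> AL \<and> AI x (parl x m) \<and> apar m (parl x m)"
  unfolding parl_def by (rule theI') (rule ex1_parallel_through)

lemma parl_unique: "x \<in> A \<Longrightarrow> m \<in> AL \<Longrightarrow> h \<in> AL \<Longrightarrow> AI x h \<Longrightarrow> apar m h \<Longrightarrow> parl x m = h"
  using ex1_parallel_through parl by blast

lemma exists_line_off_point: "x \<in> A \<Longrightarrow> \<exists>g\<in>AL. \<not> AI x g"
proof -
  assume x: "x \<in> A"
  obtain a b c where abc: "a\<in>A" "b\<in>A" "c\<in>A" "distinct [a,b,c]" "\<not> collinear3 AL AI a b c"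
    using exists_triangle by blast
  show ?thesis
  proof (rule ccontr)
    assume "\<not> ?thesis"
    then have all: "\<And>g. g\<in>AL \<Longrightarrow> AI x g" by blast
    have ab: "join a b \<in> AL" "AI a (join a b)" "AI b (join a b)" using join abc by auto
    have ac: "join a c \<in> AL" "AI a (join a c)" "AI c (join a c)" using join abc by auto
    have bc: "join b c \<in> AL" "AI b (join b c)" "AI c (join b c)" using join abc by auto
    have "join a b \<noteq> join a c" using abc ab ac unfolding collinear3_def by metis
    then have "x = a"
      using line_eq_if_two_common_points[of x a "join a b" "join a c"] ab ac all x abc by metis
    then show False using abc bc all unfolding collinear3_def by metis
  qed
qed

lemma dir_eq_iff_apar: "m \<in> AL \<Longrightarrow> h \<in> AL \<Longrightarrow> dir m = dir h \<longleftrightarrow> apar m h"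
  unfolding dir_def using apar_trans apar_sym apar_refl by blast

lemma in_dir: "m \<in> AL \<Longrightarrow> m \<in> dir m" by (simp add: dir_def apar_refl)

lemma dir_in_Dirs: "m \<in> AL \<Longrightarrow> dir m \<in> Dirs" by (simp add: Dirs_def)

lemma Dirs_subset: "d \<in> Dirs \<Longrightarrow> d \<subseteq> AL" by (auto simp: Dirs_def dir_def)

lemma dir_eq_if_mem: "d \<in> Dirs \<Longrightarrow> h \<in> d \<Longrightarrow> dir h = d"
  unfolding Dirs_def dir_def using apar_trans apar_sym by blast

lemma Dirs_eq_if_common_line: "d \<in> Dirs \<Longrightarrow> d' \<in> Dirs \<Longrightarrow> m \<in> d \<Longrightarrow> m \<in> d' \<Longrightarrow> d = d'"
  using dir_eq_if_mem by metis

lemma dline: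
  assumes "d \<in> Dirs" "x \<in> A"
  shows "dline d x \<in> AL" "AI x (dline d x)" "dline d x \<in> d"
proof -
  define m where "m = (SOME m. m \<in> d)"
  have m: "m \<in> d" unfolding m_def by (rule someI_ex) (use assms(1) in \<open>auto simp: Dirs_def intro: in_dir\<close>)
  then have "m \<in> AL" "dir m = d" using Dirs_subset dir_eq_if_mem assms(1) by auto
  then show "dline d x \<in> AL" "AI x (dline d x)" "dline d x \<in> d"
    using parl[OF assms(2) \<open>m \<in> AL\<close>] by (auto simp: dline_def m_def[symmetric] dir_def)
qed

lemma dline_unique:
  assumes "d \<in> Dirs" "x \<in> A" "m \<in> d" "AI x m"
  shows "dline d x = m"
proof -
  have "dir m = dir (dline d x)" using dir_eq_if_mem assms dline by metis
  then have "apar m (dline d x)" using dir_eq_iff_apar Dirs_subset assms dline by blast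
  then show ?thesis using apar_eq_if_common_point assms dline by metis
qed

lemma on_dline_iff:
  assumes "d \<in> Dirs" "x \<in> A" "y \<in> A"
  shows "AI y (dline d x) \<longleftrightarrow> dline d y = dline d x"
  using dline_unique[OF assms(1,3) dline(3)[OF assms(1,2)]] dline[OF assms(1,3)] by metis

lemma on_dline_sym:
  assumes "d \<in> Dirs" "x \<in> A" "y \<in> A"
  shows "AI y (dline d x) \<longleftrightarrow> AI x (dline d y)"
  using on_dline_iff[OF assms] on_dline_iff[OF assms(1,3,2)] by metis

lemma dir_dline: "d \<in> Dirs \<Longrightarrow> x \<in> A \<Longrightarrow> dir (dline d x) = d"
  using dline dir_eq_if_mem by blast

end

locale finite_affine_plane = affine_incidence +
  fixes n :: nat
  assumes apts_card: "m \<in> AL \<Longrightarrow> card (apts m) = n" and order_ge_2: "2 \<le> n"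
begin

lemma apts_finite: "m \<in> AL \<Longrightarrow> finite (apts m)"
  using apts_card order_ge_2 card.infinite by fastforce

lemma two_points_on_line: "m \<in> AL \<Longrightarrow> \<exists>a b. a \<noteq> b \<and> a \<in> apts m \<and> b \<in> apts m"
  using apts_card order_ge_2 two_elements_if_card_ge_2 by metis

lemma other_point_on_line: "m \<in> AL \<Longrightarrow> \<exists>y\<in>A. AI y m \<and> y \<noteq> x"
  using two_points_on_line unfolding apts_def by blast

lemma card_lines_through:
  assumes x: "x \<in> A" shows "card {h\<in>AL. AI x h} = n + 1"
proof -
  obtain g where g: "g \<in> AL" "\<not> AI x g" using exists_line_off_point x by blast
  define S where "S = {h\<in>AL. AI x h \<and> \<not> apar g h}"
  have split: "{h\<in>AL. AI x h} = insert (parl x g) S"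
    using parl[OF x g(1)] parl_unique[OF x g(1)] by (auto simp: S_def)
  have notin: "parl x g \<notin> S" using parl[OF x g(1)] by (auto simp: S_def)
  text \<open>The lines through \<open>x\<close> other than the parallel to \<open>g\<close> are the joins of \<open>x\<close> with \<open>g\<close>.\<close>
  have "bij_betw (join x) (apts g) S"
  proof (rule bij_betw_imageI)
    show "inj_on (join x) (apts g)"
    proof (rule inj_onI)
      fix y z assume yz: "y \<in> apts g" "z \<in> apts g" "join x y = join x z"
      then have ne: "y \<noteq> x" "z \<noteq> x" using g by (auto simp: apts_def)
      show "y = z"
      proof (rule ccontr)
        assume "y \<noteq> z"
        then have "join x y = g"
          using line_eq_if_two_common_points[of y z "join x y" g] join[of x y] join[of x z] yz ne x g
          by (auto simp: apts_def)
        then show False using join[of x y] yz ne x g by (auto simp: apts_def)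
      qed
    qed
    show "join x ` apts g = S"
    proof
      show "join x ` apts g \<subseteq> S"
      proof
        fix h assume "h \<in> join x ` apts g"
        then obtain y where y: "y \<in> apts g" "h = join x y" by auto
        then have ne: "y \<noteq> x" using g by (auto simp: apts_def)
        have j: "h \<in> AL" "AI x h" "AI y h" using join[of x y] y ne x by (auto simp: apts_def)
        have "\<not> apar g h" using apar_eq_if_common_point[of g h y] j y g by (auto simp: apts_def)
        then show "h \<in> S" using j by (auto simp: S_def)
      qed
      show "S \<subseteq> join x ` apts g"
      proof
        fix h assume h: "h \<in> S"
        then obtain y where y: "y \<in> A" "AI y g" "AI y h"
          using ex1_meet_if_not_apar[of g h] g by (auto simp: S_def)
        then have "join x y = h" using join_unique[of x y h] h x g by (auto simp: S_def)
        then show "h \<in> join x ` apts g" using y by (auto simp: apts_def)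
      qed
    qed
  qed
  then have "card S = n" using apts_card g bij_betw_same_card by metis
  moreover have "finite S" using \<open>card S = n\<close> order_ge_2 card.infinite by fastforce
  ultimately show ?thesis using split notin by simp
qed

lemma exists_non_apar:
  assumes m: "m \<in> AL"
  shows "\<exists>g\<in>AL. \<not> apar m g"
proof -
  obtain y where y: "y \<in> A" "\<not> AI y m" using exists_point_off_line m by blast
  obtain x where x: "x \<in> apts m" using two_points_on_line m by blast
  then have ne: "x \<noteq> y" using y by (auto simp: apts_def)
  have "\<not> apar m (join x y)"
    using join[of x y] x y ne apar_eq_if_common_point[of m "join x y" x] by (auto simp: apts_def)
  then show ?thesis using join[of x y] x y ne by (auto simp: apts_def)
qed

lemma card_dir:
  assumes m: "m \<in> AL"
  shows "card (dir m) = n"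
proof -
  obtain g where g: "g \<in> AL" "\<not> apar m g" using exists_non_apar m by blast
  text \<open>Every line of the class of \<open>m\<close> meets \<open>g\<close> in exactly one point.\<close>
  have "bij_betw (\<lambda>y. parl y m) (apts g) (dir m)"
  proof (rule bij_betw_imageI)
    show "inj_on (\<lambda>y. parl y m) (apts g)"
    proof (rule inj_onI)
      fix y z assume yz: "y \<in> apts g" "z \<in> apts g" "parl y m = parl z m"
      show "y = z"
      proof (rule ccontr)
        assume ne: "y \<noteq> z"
        have "parl y m = g"
          using line_eq_if_two_common_points[of y z "parl y m" g] parl[of y m] parl[of z m] yz ne m g
          by (auto simp: apts_def)
        then show False using parl[of y m] yz m g by (auto simp: apts_def)
      qed
    qed
    show "(\<lambda>y. parl y m) ` apts g = dir m"
    proof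
      show "(\<lambda>y. parl y m) ` apts g \<subseteq> dir m" using parl m by (auto simp: apts_def dir_def)
      show "dir m \<subseteq> (\<lambda>y. parl y m) ` apts g"
      proof
        fix h assume h: "h \<in> dir m"
        then have "\<not> apar h g" using apar_trans[of m h g] g m by (auto simp: dir_def)
        then obtain y where y: "y \<in> A" "AI y g" "AI y h"
          using ex1_meet_if_not_apar[of h g] g h by (auto simp: dir_def)
        then have "parl y m = h" using parl_unique[of y m h] h m by (auto simp: dir_def)
        then show "h \<in> (\<lambda>y. parl y m) ` apts g" using y by (auto simp: apts_def)
      qed
    qed
  qed
  then show ?thesis using apts_card g bij_betw_same_card by metis
qed

lemma card_Dirs_elem: "d \<in> Dirs \<Longrightarrow> card d = n"
  using card_dir by (auto simp: Dirs_def)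

lemma finite_Dirs_elem: "d \<in> Dirs \<Longrightarrow> finite d"
  using card_Dirs_elem order_ge_2 card.infinite by fastforce

lemma card_Dirs: "card Dirs = n + 1"
proof -
  obtain x where x: "x \<in> A" using exists_triangle by blast
  have "bij_betw dir {h\<in>AL. AI x h} Dirs"
  proof (rule bij_betw_imageI)
    show "inj_on dir {h\<in>AL. AI x h}"
      by (rule inj_onI) (use dir_eq_iff_apar apar_eq_if_common_point x in blast)
    show "dir ` {h\<in>AL. AI x h} = Dirs"
    proof
      show "dir ` {h\<in>AL. AI x h} \<subseteq> Dirs" by (auto simp: Dirs_def)
      show "Dirs \<subseteq> dir ` {h\<in>AL. AI x h}"
      proof
        fix d assume "d \<in> Dirs"
        then obtain m where m: "m \<in> AL" "d = dir m" by (auto simp: Dirs_def)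
        then have "dir (parl x m) = d" using parl[OF x m(1)] dir_eq_iff_apar apar_sym by auto
        then show "d \<in> dir ` {h\<in>AL. AI x h}" using parl[OF x m(1)] by blast
      qed
    qed
  qed
  then show ?thesis using card_lines_through x bij_betw_same_card by metis
qed

lemma finite_Dirs: "finite Dirs" using card_Dirs card.infinite by fastforce

lemma finite_lines: "finite AL"
proof -
  have "AL = \<Union>Dirs" by (auto simp: Dirs_def dir_def apar_refl)
  then show ?thesis using finite_Dirs finite_Dirs_elem by (metis finite_Union)
qed

lemma finite_points: "finite A"
proof -
  obtain x where x: "x \<in> A" using exists_triangle by blast
  have "A \<subseteq> insert x (\<Union>h\<in>AL. apts h)" using join x by (auto simp: apts_def)
  then show ?thesis using finite_lines apts_finite finite_subset by blast
qed


text \<open>The projective closure: the parallel classes become the points at infinity, all lying on one new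
  line.\<close>

definition "cl_pts = Inl ` A \<union> Inr ` Dirs"
definition "cl_lines = insert (Inr ()) (Inl ` AL)"

fun cl_inc :: "'a + 'b set \<Rightarrow> 'b + unit \<Rightarrow> bool" where
  "cl_inc (Inl x) (Inl m) = AI x m"
| "cl_inc (Inr d) (Inl m) = (m \<in> d)"
| "cl_inc (Inr d) (Inr u) = True"
| "cl_inc (Inl x) (Inr u) = False"

lemma cl_join_Inl_Inl:
  assumes "x \<in> A" "y \<in> A" "x \<noteq> y"
  shows "\<exists>!g. g \<in> cl_lines \<and> cl_inc (Inl x) g \<and> cl_inc (Inl y) g"
proof (rule ex1I[of _ "Inl (join x y)"])
  show "Inl (join x y) \<in> cl_lines \<and> cl_inc (Inl x) (Inl (join x y)) \<and> cl_inc (Inl y) (Inl (join x y))"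
    using join[OF assms] by (simp add: cl_lines_def)
  fix g assume "g \<in> cl_lines \<and> cl_inc (Inl x) g \<and> cl_inc (Inl y) g"
  then show "g = Inl (join x y)" using join_unique[OF assms] by (auto simp: cl_lines_def)
qed

lemma cl_join_Inl_Inr:
  assumes "x \<in> A" "d \<in> Dirs"
  shows "\<exists>!g. g \<in> cl_lines \<and> cl_inc (Inl x) g \<and> cl_inc (Inr d) g"
proof (rule ex1I[of _ "Inl (dline d x)"])
  show "Inl (dline d x) \<in> cl_lines \<and> cl_inc (Inl x) (Inl (dline d x)) \<and> cl_inc (Inr d) (Inl (dline d x))"
    using dline[OF assms(2,1)] by (simp add: cl_lines_def)
  fix g assume "g \<in> cl_lines \<and> cl_inc (Inl x) g \<and> cl_inc (Inr d) g"
  then show "g = Inl (dline d x)" using dline_unique[OF assms(2,1)] by (auto simp: cl_lines_def)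
qed

lemma cl_join_Inr_Inr:
  assumes "d \<in> Dirs" "d' \<in> Dirs" "d \<noteq> d'"
  shows "\<exists>!g. g \<in> cl_lines \<and> cl_inc (Inr d) g \<and> cl_inc (Inr d') g"
proof (rule ex1I[of _ "Inr ()"])
  fix g assume g: "g \<in> cl_lines \<and> cl_inc (Inr d) g \<and> cl_inc (Inr d') g"
  show "g = Inr ()"
  proof (cases g)
    case (Inl m)
    then have "m \<in> d" "m \<in> d'" using g by auto
    then show ?thesis using Dirs_eq_if_common_line assms by blast
  qed simp
qed (simp add: cl_lines_def)

lemma cl_join:
  assumes "p \<in> cl_pts" "q \<in> cl_pts" "p \<noteq> q"
  shows "\<exists>!g. g \<in> cl_lines \<and> cl_inc p g \<and> cl_inc q g"
proof -
  consider x y where "p = Inl x" "q = Inl y" "x \<in> A" "y \<in> A"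
    | x d where "p = Inl x" "q = Inr d" "x \<in> A" "d \<in> Dirs"
    | x d where "p = Inr d" "q = Inl x" "x \<in> A" "d \<in> Dirs"
    | d d' where "p = Inr d" "q = Inr d'" "d \<in> Dirs" "d' \<in> Dirs"
    using assms(1,2) by (auto simp: cl_pts_def)
  then show ?thesis
  proof cases
    case 1 then show ?thesis using cl_join_Inl_Inl assms(3) by simp
  next
    case 2 then show ?thesis using cl_join_Inl_Inr by simp
  next
    case 3 then show ?thesis using cl_join_Inl_Inr[of x d] by (simp add: conj_commute)
  next
    case 4 then show ?thesis using cl_join_Inr_Inr assms(3) by simp
  qed
qed

lemma cl_meet_Inl_Inl:
  assumes "m \<in> AL" "h \<in> AL" "m \<noteq> h"
  shows "\<exists>!p. p \<in> cl_pts \<and> cl_inc p (Inl m) \<and> cl_inc p (Inl h)"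
proof (cases "apar m h")
  case True
  show ?thesis
  proof (rule ex1I[of _ "Inr (dir m)"])
    show "Inr (dir m) \<in> cl_pts \<and> cl_inc (Inr (dir m)) (Inl m) \<and> cl_inc (Inr (dir m)) (Inl h)"
      using True assms dir_in_Dirs in_dir by (auto simp: cl_pts_def dir_def)
    fix p assume p: "p \<in> cl_pts \<and> cl_inc p (Inl m) \<and> cl_inc p (Inl h)"
    show "p = Inr (dir m)"
    proof (cases p)
      case (Inl x)
      then show ?thesis using p True assms(3) apar_eq_if_common_point by (auto simp: cl_pts_def)
    next
      case (Inr d)
      then show ?thesis using p dir_eq_if_mem by (auto simp: cl_pts_def)
    qed
  qed
next
  case False
  then obtain x where x: "x \<in> A" "AI x m" "AI x h"
    and xu: "\<And>y. y \<in> A \<Longrightarrow> AI y m \<Longrightarrow> AI y h \<Longrightarrow> y = x"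
    using ex1_meet_if_not_apar[OF assms(1,2)] by metis
  show ?thesis
  proof (rule ex1I[of _ "Inl x"])
    show "Inl x \<in> cl_pts \<and> cl_inc (Inl x) (Inl m) \<and> cl_inc (Inl x) (Inl h)" using x by (simp add: cl_pts_def)
    fix p assume p: "p \<in> cl_pts \<and> cl_inc p (Inl m) \<and> cl_inc p (Inl h)"
    show "p = Inl x"
    proof (cases p)
      case (Inl y)
      then show ?thesis using p xu by (auto simp: cl_pts_def)
    next
      case (Inr d)
      then have "d \<in> Dirs" "m \<in> d" "h \<in> d" using p by (auto simp: cl_pts_def)
      then have "dir m = dir h" using dir_eq_if_mem by metis
      then show ?thesis using False dir_eq_iff_apar assms by blast
    qed
  qed
qed

lemma cl_meet_Inl_Inr:
  assumes "m \<in> AL" shows "\<exists>!p. p \<in> cl_pts \<and> cl_inc p (Inl m) \<and> cl_inc p (Inr ())"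
proof (rule ex1I[of _ "Inr (dir m)"])
  show "Inr (dir m) \<in> cl_pts \<and> cl_inc (Inr (dir m)) (Inl m) \<and> cl_inc (Inr (dir m)) (Inr ())"
    using dir_in_Dirs[OF assms] in_dir[OF assms] by (simp add: cl_pts_def)
  fix p assume p: "p \<in> cl_pts \<and> cl_inc p (Inl m) \<and> cl_inc p (Inr ())"
  then obtain d where "p = Inr d" "d \<in> Dirs" "m \<in> d" by (cases p) (auto simp: cl_pts_def)
  then show "p = Inr (dir m)" using dir_eq_if_mem by simp
qed

lemma cl_meet:
  assumes "g \<in> cl_lines" "h \<in> cl_lines" "g \<noteq> h"
  shows "\<exists>!p. p \<in> cl_pts \<and> cl_inc p g \<and> cl_inc p h"
proof -
  consider m m' where "g = Inl m" "h = Inl m'" "m \<in> AL" "m' \<in> AL"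
    | m where "g = Inl m" "h = Inr ()" "m \<in> AL"
    | m where "g = Inr ()" "h = Inl m" "m \<in> AL"
    using assms by (auto simp: cl_lines_def)
  then show ?thesis
  proof cases
    case 1 then show ?thesis using cl_meet_Inl_Inl assms(3) by simp
  next
    case 2 then show ?thesis using cl_meet_Inl_Inr by simp
  next
    case 3 then show ?thesis using cl_meet_Inl_Inr[of m] by (simp add: conj_commute)
  qed
qed

lemma cl_quadrangle:
  "\<exists>a\<in>cl_pts. \<exists>b\<in>cl_pts. \<exists>c\<in>cl_pts. \<exists>d\<in>cl_pts. distinct [a, b, c, d] \<and>
    \<not> collinear3 cl_lines cl_inc a b c \<and> \<not> collinear3 cl_lines cl_inc a b d \<and>
    \<not> collinear3 cl_lines cl_inc a c d \<and> \<not> collinear3 cl_lines cl_inc b c d"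
proof -
  obtain a b where ab: "a \<in> A" "b \<in> A" "a \<noteq> b" using exists_triangle by auto
  define j where "j = join a b"
  have j: "j \<in> AL" "AI a j" "AI b j" using join ab by (auto simp: j_def)
  have "card (Dirs - {dir j}) = n" using card_Dirs dir_in_Dirs[OF j(1)] finite_Dirs by simp
  then obtain d1 d2 where d: "d1 \<in> Dirs - {dir j}" "d2 \<in> Dirs - {dir j}" "d1 \<noteq> d2"
    using two_elements_if_card_ge_2[of "Dirs - {dir j}"] order_ge_2 by auto
  have ab_d: "\<not> collinear3 cl_lines cl_inc (Inl a) (Inl b) (Inr d)" if "d \<in> Dirs - {dir j}" for d
  proof
    assume "collinear3 cl_lines cl_inc (Inl a) (Inl b) (Inr d)"
    then obtain m where "m \<in> AL" "AI a m" "AI b m" "m \<in> d" by (auto simp: collinear3_def cl_lines_def)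
    then show False using join_unique[OF ab] dir_eq_if_mem that j_def by blast
  qed
  have x_d1_d2: "\<not> collinear3 cl_lines cl_inc (Inl x) (Inr d1) (Inr d2)" for x
    using d Dirs_eq_if_common_line by (auto simp: collinear3_def cl_lines_def)
  show ?thesis
    using ab d ab_d x_d1_d2[of a] x_d1_d2[of b]
    by (intro bexI[of _ "Inl a"] bexI[of _ "Inl b"] bexI[of _ "Inr d1"] bexI[of _ "Inr d2"])
      (auto simp: cl_pts_def)
qed

theorem proj_plane_closure: "proj_plane cl_pts cl_lines cl_inc"
  unfolding proj_plane_def using cl_join cl_meet cl_quadrangle by blast

end


section \<open>Affine Hjelmslev planes of type $(t,t)$\<close>

locale tt_AH_plane_epi = affine_incidence A AL AI
  for A :: "'a set" and AL :: "'b set" and AI :: "'a \<Rightarrow> 'b \<Rightarrow> bool" +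
  fixes t :: nat and PK :: "'a set" and LK :: "'b set" and IK :: "'a \<Rightarrow> 'b \<Rightarrow> bool"
    and \<phi> :: "'a \<Rightarrow> 'a" and \<psi> :: "'b \<Rightarrow> 'b"
  assumes t_ge_2: "t \<ge> 2"
    and K_join: "\<And>p q. p \<in> PK \<Longrightarrow> q \<in> PK \<Longrightarrow> \<exists>g\<in>LK. IK p g \<and> IK q g"
    and phi_onto: "\<phi> ` PK = A" and psi_onto: "\<psi> ` LK = AL"
    and inc_phi_psi: "\<And>p g. p \<in> PK \<Longrightarrow> g \<in> LK \<Longrightarrow> IK p g \<Longrightarrow> AI (\<phi> p) (\<psi> g)"
    and phi_eq_iff_pt_nb: "\<And>p q. p \<in> PK \<Longrightarrow> q \<in> PK \<Longrightarrow> \<phi> p = \<phi> q \<longleftrightarrow> pt_nb PK LK IK p q"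
    and psi_eq_if_ln_nb: "\<And>g h. g \<in> LK \<Longrightarrow> h \<in> LK \<Longrightarrow> ln_nb PK LK IK g h \<Longrightarrow> \<psi> g = \<psi> h"
    and psi_apar_if_disjoint: "\<And>g h. g \<in> LK \<Longrightarrow> h \<in> LK \<Longrightarrow> \<not> (\<exists>p\<in>PK. IK p g \<and> IK p h) \<Longrightarrow>
      aff_parallel A AI (\<psi> g) (\<psi> h)"
    and K_line_finite: "\<And>g. g \<in> LK \<Longrightarrow> finite {p\<in>PK. IK p g}"
    and K_line_card: "\<And>g. g \<in> LK \<Longrightarrow> card {p\<in>PK. IK p g} = t * t"
    and K_nb_card: "\<And>g p. g \<in> LK \<Longrightarrow> p \<in> PK \<Longrightarrow> IK p g \<Longrightarrow> card {q\<in>PK. IK q g \<and> pt_nb PK LK IK p q} = t"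
begin

definition "pts g = {p\<in>PK. IK p g}"
definition "fibre x = {p\<in>PK. \<phi> p = x}"

lemma finite_pts: "g \<in> LK \<Longrightarrow> finite (pts g)" using K_line_finite by (simp add: pts_def)
lemma card_pts: "g \<in> LK \<Longrightarrow> card (pts g) = t * t" using K_line_card by (simp add: pts_def)

lemma phi_in_A: "p \<in> PK \<Longrightarrow> \<phi> p \<in> A" using phi_onto by auto
lemma psi_in_AL: "g \<in> LK \<Longrightarrow> \<psi> g \<in> AL" using psi_onto by auto

lemma K_line_unique:
  assumes "g \<in> LK" "h \<in> LK" "p \<in> PK" "q \<in> PK" "IK p g" "IK q g" "IK p h" "IK q h" "\<phi> p \<noteq> \<phi> q"
  shows "g = h"
  using assms phi_eq_iff_pt_nb unfolding pt_nb_def by blast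

lemma K_meet_unique:
  assumes "g \<in> LK" "h \<in> LK" "\<psi> g \<noteq> \<psi> h" "p \<in> PK" "q \<in> PK" "IK p g" "IK q g" "IK p h" "IK q h"
  shows "p = q"
  using assms psi_eq_if_ln_nb unfolding ln_nb_def by blast

text \<open>A line of \<open>K\<close> through points over \<open>x\<close> and over some \<open>y\<close> off \<open>\<psi> g\<close> is mapped to a line not
  parallel to \<open>\<psi> g\<close>, so it meets \<open>g\<close>, necessarily over \<open>x\<close>.\<close>
lemma apts_psi_eq_image:
  assumes g: "g \<in> LK"
  shows "apts (\<psi> g) = \<phi> ` pts g"
proof
  show "\<phi> ` pts g \<subseteq> apts (\<psi> g)" using inc_phi_psi g phi_in_A by (auto simp: pts_def apts_def)
  show "apts (\<psi> g) \<subseteq> \<phi> ` pts g"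
  proof
    fix x assume "x \<in> apts (\<psi> g)"
    then have x: "x \<in> A" "AI x (\<psi> g)" by (auto simp: apts_def)
    obtain y where y: "y \<in> A" "\<not> AI y (\<psi> g)" using exists_point_off_line psi_in_AL g by blast
    obtain q where q: "q \<in> PK" "\<phi> q = x" using x phi_onto by auto
    obtain r where r: "r \<in> PK" "\<phi> r = y" using y phi_onto by auto
    obtain h where h: "h \<in> LK" "IK q h" "IK r h" using K_join q r by blast
    have "AI x (\<psi> h)" "AI y (\<psi> h)" using inc_phi_psi h q r by auto
    then have "\<psi> h \<noteq> \<psi> g" using y by auto
    then have "\<not> apar (\<psi> g) (\<psi> h)" using apar_eq_if_common_point[of "\<psi> g" "\<psi> h" x] x \<open>AI x (\<psi> h)\<close> by metis
    then obtain p where p: "p \<in> PK" "IK p g" "IK p h" using psi_apar_if_disjoint g h(1) unfolding apar_def by blast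
    have "AI (\<phi> p) (\<psi> g)" "AI (\<phi> p) (\<psi> h)" using inc_phi_psi p g h by auto
    then have "\<phi> p = x"
      using line_eq_if_two_common_points[of "\<phi> p" x "\<psi> g" "\<psi> h"] phi_in_A p x \<open>AI x (\<psi> h)\<close> \<open>\<psi> h \<noteq> \<psi> g\<close> psi_in_AL g h by metis
    then show "x \<in> \<phi> ` pts g" using p by (auto simp: pts_def)
  qed
qed

lemma card_nb_on_line:
  assumes "g \<in> LK" "p \<in> pts g"
  shows "card {q\<in>pts g. \<phi> q = \<phi> p} = t"
proof -
  have "{q\<in>pts g. \<phi> q = \<phi> p} = {q\<in>PK. IK q g \<and> pt_nb PK LK IK p q}"
    using assms by (auto simp: pts_def) (metis phi_eq_iff_pt_nb)+
  then show ?thesis using K_nb_card assms by (auto simp: pts_def)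
qed

lemma card_apts_psi:
  assumes "g \<in> LK"
  shows "card (apts (\<psi> g)) = t"
proof -
  have "card (pts g) = t * card (\<phi> ` pts g)"
    by (rule card_eq_mult_card_image) (use assms finite_pts card_nb_on_line in auto)
  then show ?thesis using apts_psi_eq_image assms card_pts t_ge_2 by auto
qed

end

sublocale tt_AH_plane_epi \<subseteq> finite_affine_plane A AL AI t
  by unfold_locales (use card_apts_psi psi_onto t_ge_2 in auto)

context tt_AH_plane_epi
begin

definition "kjoin p q = (SOME g. g\<in>LK \<and> IK p g \<and> IK q g)"

lemma kjoin: "p \<in> PK \<Longrightarrow> q \<in> PK \<Longrightarrow> kjoin p q \<in> LK \<and> IK p (kjoin p q) \<and> IK q (kjoin p q)"
  unfolding kjoin_def by (rule someI_ex) (use K_join in blast)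

lemma kjoin_unique:
  "p \<in> PK \<Longrightarrow> q \<in> PK \<Longrightarrow> \<phi> p \<noteq> \<phi> q \<Longrightarrow> g \<in> LK \<Longrightarrow> IK p g \<Longrightarrow> IK q g \<Longrightarrow> kjoin p q = g"
  using kjoin K_line_unique by metis

lemma psi_eq_join:
  "g \<in> LK \<Longrightarrow> p \<in> PK \<Longrightarrow> q \<in> PK \<Longrightarrow> IK p g \<Longrightarrow> IK q g \<Longrightarrow> \<phi> p \<noteq> \<phi> q \<Longrightarrow>
    \<psi> g = join (\<phi> p) (\<phi> q)"
  using join_unique[of "\<phi> p" "\<phi> q" "\<psi> g"] inc_phi_psi phi_in_A psi_in_AL by metis

lemma fibre_nonempty: "x \<in> A \<Longrightarrow> \<exists>R. R \<in> fibre x" using phi_onto by (auto simp: fibre_def)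

lemma card_block: "g \<in> LK \<Longrightarrow> P \<in> pts g \<Longrightarrow> card (pts g \<inter> fibre (\<phi> P)) = t"
proof -
  assume a: "g \<in> LK" "P \<in> pts g"
  have "pts g \<inter> fibre (\<phi> P) = {q\<in>pts g. \<phi> q = \<phi> P}" by (auto simp: pts_def fibre_def)
  then show ?thesis using card_nb_on_line[OF a] by simp
qed

lemma finite_block: "g \<in> LK \<Longrightarrow> finite (pts g \<inter> fibre x)" using finite_pts by auto

lemma line_meets_fibre: "g \<in> LK \<Longrightarrow> AI x (\<psi> g) \<Longrightarrow> x \<in> A \<Longrightarrow> \<exists>P. P \<in> pts g \<inter> fibre x"
proof -
  assume a: "g \<in> LK" "AI x (\<psi> g)" "x \<in> A"
  then have "x \<in> \<phi> ` pts g" using apts_psi_eq_image[of g] by (auto simp: apts_def)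
  then show ?thesis by (auto simp: pts_def fibre_def)
qed

lemma common_point_over:
  assumes g: "g \<in> LK" and h: "h \<in> LK" and ne: "\<psi> g \<noteq> \<psi> h" and x: "x \<in> A" "AI x (\<psi> g)" "AI x (\<psi> h)"
  shows "\<exists>p. p \<in> PK \<and> IK p g \<and> IK p h \<and> \<phi> p = x"
proof -
  have "\<not> apar (\<psi> g) (\<psi> h)" using apar_eq_if_common_point[of "\<psi> g" "\<psi> h" x] x ne by blast
  then obtain p where p: "p \<in> PK" "IK p g" "IK p h" using psi_apar_if_disjoint g h unfolding apar_def by blast
  have "AI (\<phi> p) (\<psi> g)" "AI (\<phi> p) (\<psi> h)" using inc_phi_psi p g h by auto
  then have "\<phi> p = x" using line_eq_if_two_common_points[of "\<phi> p" x "\<psi> g" "\<psi> h"] phi_in_A p x ne psi_in_AL g h by metis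
  then show ?thesis using p by blast
qed

lemma psi_kjoin': "R \<in> PK \<Longrightarrow> Q \<in> PK \<Longrightarrow> \<phi> Q = x \<Longrightarrow> \<phi> R \<noteq> x \<Longrightarrow> \<psi> (kjoin R Q) = join x (\<phi> R)"
  using psi_eq_join[of "kjoin R Q" Q R] kjoin[of R Q] by metis

lemma psi_kjoin: "R \<in> PK \<Longrightarrow> Q \<in> PK \<Longrightarrow> \<phi> R \<noteq> \<phi> Q \<Longrightarrow> \<psi> (kjoin R Q) = join (\<phi> R) (\<phi> Q)"
  using psi_eq_join kjoin by metis

lemma kjoin_covers:
  assumes x: "x \<in> A" and R: "R \<in> PK" "\<phi> R \<noteq> x" and R': "R' \<in> PK" "\<phi> R' \<noteq> x"
    and ne: "join x (\<phi> R) \<noteq> join x (\<phi> R')"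
    and Q: "Q \<in> fibre x" and P: "P \<in> fibre x"
  shows "\<exists>p\<in>pts (kjoin R P) \<inter> fibre x. kjoin R' Q = kjoin R' p"
proof -
  have QP: "Q \<in> PK" "\<phi> Q = x" "P \<in> PK" "\<phi> P = x" using Q P by (auto simp: fibre_def)
  define g where "g = kjoin R P"
  define h where "h = kjoin R' Q"
  have g: "g \<in> LK" "IK R g" "IK P g" using kjoin R QP by (auto simp: g_def)
  have h: "h \<in> LK" "IK R' h" "IK Q h" using kjoin R' QP by (auto simp: h_def)
  have pg: "\<psi> g = join x (\<phi> R)" using psi_kjoin[of R P] R QP join_unique phi_in_A
    by (metis g_def join)
  have ph: "\<psi> h = join x (\<phi> R')" using psi_kjoin[of R' Q] R' QP join_unique phi_in_A
    by (metis h_def join)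
  have "AI x (\<psi> g)" "AI x (\<psi> h)" using inc_phi_psi[of P g] inc_phi_psi[of Q h] g h QP by auto
  then obtain p where p: "p \<in> PK" "IK p g" "IK p h" "\<phi> p = x" using common_point_over[OF g(1) h(1) _ x] pg ph ne by metis
  have "kjoin R' p = h" using kjoin_unique[of R' p h] R' p h by auto
  moreover have "p \<in> pts (kjoin R P) \<inter> fibre x" using p by (auto simp: g_def pts_def fibre_def)
  ultimately show ?thesis unfolding h_def by metis
qed

lemma exists_two_lines_at:
  assumes x: "x \<in> A"
  shows "\<exists>R R'. R \<in> PK \<and> R' \<in> PK \<and> \<phi> R \<noteq> x \<and> \<phi> R' \<noteq> x \<and> join x (\<phi> R) \<noteq> join x (\<phi> R')"
proof -
  have "2 \<le> card {h\<in>AL. AI x h}" using card_lines_through x t_ge_2 by simp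
  then obtain m1 m2 where m: "m1 \<in> AL" "AI x m1" "m2 \<in> AL" "AI x m2" "m1 \<noteq> m2"
    using two_elements_if_card_ge_2[of "{h\<in>AL. AI x h}"] by blast
  obtain y1 y2 where y: "y1 \<in> A" "AI y1 m1" "y1 \<noteq> x" "y2 \<in> A" "AI y2 m2" "y2 \<noteq> x"
    using other_point_on_line m by metis
  obtain R R' where "R \<in> PK" "\<phi> R = y1" "R' \<in> PK" "\<phi> R' = y2" using y phi_onto by (metis imageE)
  moreover have "join x y1 = m1" "join x y2 = m2" using join_unique x y m by auto
  ultimately show ?thesis using y m by metis
qed

lemma finite_fibre:
  assumes x: "x \<in> A"
  shows "finite (fibre x)"
proof -
  obtain R R' where RR: "R \<in> PK" "R' \<in> PK" "\<phi> R \<noteq> x" "\<phi> R' \<noteq> x" "join x (\<phi> R) \<noteq> join x (\<phi> R')"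
    using exists_two_lines_at x by blast
  obtain P where P: "P \<in> fibre x" using fibre_nonempty x by blast
  have "fibre x \<subseteq> (\<Union>p\<in>pts (kjoin R P) \<inter> fibre x. pts (kjoin R' p))"
  proof
    fix Q assume Q: "Q \<in> fibre x"
    obtain p where "p\<in>pts (kjoin R P) \<inter> fibre x" "kjoin R' Q = kjoin R' p"
      using kjoin_covers[OF x RR(1,3) RR(2,4) RR(5) Q P] by blast
    moreover have "Q \<in> pts (kjoin R' Q)" using kjoin RR Q by (auto simp: pts_def fibre_def)
    ultimately show "Q \<in> (\<Union>p\<in>pts (kjoin R P) \<inter> fibre x. pts (kjoin R' p))" by auto
  qed
  moreover have "finite (\<Union>p\<in>pts (kjoin R P) \<inter> fibre x. pts (kjoin R' p))"
    using finite_pts kjoin RR P by (auto simp: fibre_def pts_def)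
  ultimately show ?thesis using finite_subset by blast
qed

lemma card_fibre_eq_mult:
  assumes x: "x \<in> A" and R: "R \<in> PK" "\<phi> R \<noteq> x"
  shows "card (fibre x) = t * card (kjoin R ` fibre x)"
proof (rule card_eq_mult_card_image)
  show "finite (fibre x)" using finite_fibre x by simp
  fix g assume "g \<in> kjoin R ` fibre x"
  then obtain Q0 where Q0: "Q0 \<in> fibre x" "g = kjoin R Q0" by auto
  have g: "g \<in> LK" "IK R g" "IK Q0 g" using kjoin R Q0 by (auto simp: fibre_def)
  have "{Q \<in> fibre x. kjoin R Q = g} = pts g \<inter> fibre x"
  proof
    show "{Q \<in> fibre x. kjoin R Q = g} \<subseteq> pts g \<inter> fibre x" using kjoin R by (auto simp: pts_def fibre_def)
    show "pts g \<inter> fibre x \<subseteq> {Q \<in> fibre x. kjoin R Q = g}"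
      using kjoin_unique[of R _ g] R g by (auto simp: pts_def fibre_def)
  qed
  moreover have "Q0 \<in> pts g" "\<phi> Q0 = x" using g Q0 by (auto simp: pts_def fibre_def)
  ultimately show "card {Q \<in> fibre x. kjoin R Q = g} = t" using card_block[of g Q0] g by simp
qed

text \<open>Every line from \<open>R'\<close> to the fibre over \<open>x\<close> meets the block over \<open>x\<close> of a fixed line from \<open>R\<close>
  exactly once.\<close>
lemma card_kjoin_image:
  assumes x: "x \<in> A" and R: "R \<in> PK" "\<phi> R \<noteq> x" and R': "R' \<in> PK" "\<phi> R' \<noteq> x"
    and ne: "join x (\<phi> R) \<noteq> join x (\<phi> R')" and P: "P \<in> fibre x"
  shows "card (kjoin R' ` fibre x) = t"
proof -
  define g where "g = kjoin R P"
  have g: "g \<in> LK" "IK R g" "IK P g" using kjoin R P by (auto simp: g_def fibre_def)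
  have "bij_betw (kjoin R') (pts g \<inter> fibre x) (kjoin R' ` fibre x)"
  proof (rule bij_betw_imageI)
    show "inj_on (kjoin R') (pts g \<inter> fibre x)"
    proof (rule inj_onI)
      fix p1 p2 assume p: "p1 \<in> pts g \<inter> fibre x" "p2 \<in> pts g \<inter> fibre x" "kjoin R' p1 = kjoin R' p2"
      have pp: "p1 \<in> PK" "p2 \<in> PK" "\<phi> p1 = x" "\<phi> p2 = x" "IK p1 g" "IK p2 g" using p by (auto simp: pts_def fibre_def)
      define h where "h = kjoin R' p1"
      have h: "h \<in> LK" "IK R' h" "IK p1 h" "IK p2 h" using kjoin[of R' p1] kjoin[of R' p2] R' pp p(3) by (auto simp: h_def)
      have "\<psi> g = join x (\<phi> R)" using psi_kjoin'[of R P x] R P by (simp add: g_def fibre_def)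
      moreover have "\<psi> h = join x (\<phi> R')" using psi_kjoin'[of R' p1 x] R' pp by (simp add: h_def)
      ultimately show "p1 = p2" using K_meet_unique[of g h p1 p2] g h pp ne by auto
    qed
    show "kjoin R' ` (pts g \<inter> fibre x) = kjoin R' ` fibre x"
    proof
      show "kjoin R' ` (pts g \<inter> fibre x) \<subseteq> kjoin R' ` fibre x" by auto
      show "kjoin R' ` fibre x \<subseteq> kjoin R' ` (pts g \<inter> fibre x)"
        using kjoin_covers[OF x R R' ne _ P] by (auto simp: g_def)
    qed
  qed
  then have "card (kjoin R' ` fibre x) = card (pts g \<inter> fibre x)" by (simp add: bij_betw_same_card)
  also have "\<dots> = t" using card_block[of g P] g P by (auto simp: pts_def fibre_def)
  finally show ?thesis .
qed

lemma card_fibre: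
  assumes x: "x \<in> A"
  shows "card (fibre x) = t * t"
proof -
  obtain R R' where RR: "R \<in> PK" "R' \<in> PK" "\<phi> R \<noteq> x" "\<phi> R' \<noteq> x" "join x (\<phi> R) \<noteq> join x (\<phi> R')"
    using exists_two_lines_at x by blast
  obtain P where P: "P \<in> fibre x" using fibre_nonempty x by blast
  show ?thesis using card_fibre_eq_mult[OF x RR(2,4)] card_kjoin_image[OF x RR(1,3) RR(2,4) RR(5) P] by simp
qed

definition "lines_at P m = {g\<in>LK. IK P g \<and> \<psi> g = m}"

lemma lines_at_nonempty:
  assumes P: "P \<in> PK" and m: "m \<in> AL" "AI (\<phi> P) m" shows "lines_at P m \<noteq> {}"
proof -
  obtain y where y: "y \<in> A" "AI y m" "y \<noteq> \<phi> P" using other_point_on_line m by blast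
  then obtain R where R: "R \<in> PK" "\<phi> R = y" using phi_onto by auto
  have "\<psi> (kjoin R P) = join (\<phi> R) (\<phi> P)" using psi_kjoin R P y by auto
  also have "\<dots> = m" using join_unique R y P m phi_in_A by metis
  finally show ?thesis using kjoin[OF R(1) P] by (auto simp: lines_at_def)
qed

definition "pencil_block P m = pts (SOME g. g \<in> lines_at P m) \<inter> fibre (\<phi> P)"

lemma pencil_block_line:
  assumes "P \<in> PK" "m \<in> AL" "AI (\<phi> P) m"
  shows "\<exists>k\<in>lines_at P m. pencil_block P m = pts k \<inter> fibre (\<phi> P)"
  using someI_ex[of "\<lambda>g. g \<in> lines_at P m"] lines_at_nonempty[OF assms]
  unfolding pencil_block_def by blast

lemma blocks_meet:
  assumes "g \<in> LK" "h \<in> LK" "\<psi> g \<noteq> \<psi> h" "P \<in> pts g" "P \<in> pts h"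
  shows "(pts g \<inter> fibre (\<phi> P)) \<inter> (pts h \<inter> fibre (\<phi> P)) = {P}"
  using assms K_meet_unique[OF assms(1-3)] by (auto simp: pts_def fibre_def)

text \<open>The block of \<open>g\<close> at \<open>P\<close> is determined by \<open>P\<close> and \<open>\<psi> g\<close> alone: it is what the blocks at \<open>P\<close>
  of lines over the other \<open>t\<close> affine lines through \<open>\<phi> P\<close> leave of the fibre.\<close>
lemma block_eq_complement:
  assumes g: "g \<in> LK" and P: "P \<in> pts g"
  shows "pts g \<inter> fibre (\<phi> P) =
    insert P (fibre (\<phi> P) - (\<Union>m\<in>{m\<in>AL. AI (\<phi> P) m \<and> m \<noteq> \<psi> g}. pencil_block P m))"
proof -
  define x where "x = \<phi> P"
  define I where "I = {m\<in>AL. AI x m \<and> m \<noteq> \<psi> g}"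
  have PK: "P \<in> PK" "IK P g" using P by (auto simp: pts_def)
  have x: "x \<in> A" using phi_in_A PK by (simp add: x_def)
  have Px: "P \<in> fibre x" using PK by (simp add: fibre_def x_def)
  have gx: "\<psi> g \<in> AL" "AI x (\<psi> g)" using psi_in_AL g inc_phi_psi PK by (auto simp: x_def)
  have I: "{h\<in>AL. AI x h} = insert (\<psi> g) I" "\<psi> g \<notin> I" "finite I"
    using gx finite_lines by (auto simp: I_def)
  then have cI: "card I = t" using card_lines_through[OF x] by simp
  have line: "\<exists>k\<in>LK. \<psi> k = i \<and> P \<in> pts k \<and> pencil_block P i = pts k \<inter> fibre x" if "i \<in> I" for i
    using pencil_block_line[of P i] that PK by (auto simp: I_def lines_at_def pts_def x_def)
  have blk: "P \<in> pencil_block P i \<and> pencil_block P i \<subseteq> fibre x \<and> card (pencil_block P i) = t"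
    if "i \<in> I" for i
    using line[OF that] card_block PK by (force simp: fibre_def x_def)
  have disj: "pencil_block P i \<inter> pencil_block P j = {P}" if "i \<in> I" "j \<in> I" "i \<noteq> j" for i j
    using line[OF that(1)] line[OF that(2)] blocks_meet that by (metis x_def)
  have meet: "(pts g \<inter> fibre x) \<inter> pencil_block P i \<subseteq> {P}" if "i \<in> I" for i
    using line[OF that] blocks_meet[OF g _ _ P] that by (force simp: I_def x_def)
  have "pts g \<inter> fibre x = insert P (fibre x - (\<Union>i\<in>I. pencil_block P i))"
    by (rule transversal_eq_complement[where t = t])
      (use finite_fibre[OF x] card_fibre[OF x] I(3) cI blk disj meet P Px t_ge_2 card_block[OF g P]
        in \<open>auto simp: x_def\<close>)
  then show ?thesis by (simp add: x_def I_def)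
qed

lemma block_eq:
  assumes "g \<in> LK" "h \<in> LK" "\<psi> g = \<psi> h" "P \<in> pts g" "P \<in> pts h"
  shows "pts g \<inter> fibre (\<phi> P) = pts h \<inter> fibre (\<phi> P)"
  using block_eq_complement[of g P] block_eq_complement[of h P] assms by simp

definition "pclass g = {h\<in>LK. \<psi> h = \<psi> g \<and> (h = g \<or> pts h \<inter> pts g = {})}"

lemma lines_at_eq_image:
  assumes P: "P \<in> PK" and m: "m \<in> AL" "AI (\<phi> P) m" and z: "z \<in> A" "AI z m" "z \<noteq> \<phi> P"
  shows "lines_at P m = kjoin P ` fibre z"
proof
  show "lines_at P m \<subseteq> kjoin P ` fibre z"
  proof
    fix h assume h: "h \<in> lines_at P m"
    then obtain Q where Q: "Q \<in> pts h \<inter> fibre z" using line_meets_fibre[of h z] z by (auto simp: lines_at_def)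
    have "kjoin P Q = h" using kjoin_unique[of P Q h] P Q h z by (auto simp: lines_at_def pts_def fibre_def)
    then show "h \<in> kjoin P ` fibre z" using Q by auto
  qed
  show "kjoin P ` fibre z \<subseteq> lines_at P m"
  proof
    fix h assume "h \<in> kjoin P ` fibre z"
    then obtain Q where Q: "Q \<in> fibre z" "h = kjoin P Q" by auto
    have "\<psi> h = join z (\<phi> P)" using psi_kjoin'[of P Q z] P Q z by (auto simp: fibre_def)
    also have "\<dots> = m" using join_unique[of z "\<phi> P" m] z m P phi_in_A by auto
    finally show "h \<in> lines_at P m" using kjoin[of P Q] P Q by (auto simp: lines_at_def fibre_def)
  qed
qed

lemma card_lines_at:
  assumes P: "P \<in> PK" and m: "m \<in> AL" "AI (\<phi> P) m"
  shows "card (lines_at P m) = t"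
proof -
  obtain z where z: "z \<in> A" "AI z m" "z \<noteq> \<phi> P" using other_point_on_line m phi_in_A P by blast
  have "card (fibre z) = t * card (kjoin P ` fibre z)" using card_fibre_eq_mult[of z P] z P by auto
  then have "t * t = t * card (lines_at P m)" using lines_at_eq_image[OF P m z] card_fibre z by simp
  then show ?thesis using t_ge_2 by simp
qed

lemma finite_lines_at: "P \<in> PK \<Longrightarrow> m \<in> AL \<Longrightarrow> AI (\<phi> P) m \<Longrightarrow> finite (lines_at P m)"
  using card_lines_at t_ge_2 card.infinite by fastforce

lemma common_points_eq_block:
  assumes P: "P \<in> PK" and h: "h \<in> lines_at P (\<psi> g)" and g: "g \<in> LK" "\<not> IK P g"
    and Q: "Q \<in> pts h \<inter> pts g"
  shows "\<phi> Q \<noteq> \<phi> P" "pts h \<inter> pts g = pts g \<inter> fibre (\<phi> Q)"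
proof -
  have hL: "h \<in> LK" "IK P h" "\<psi> h = \<psi> g" using h by (auto simp: lines_at_def)
  have "Q \<in> pts h" "Q \<in> pts g" using Q by auto
  then have bl: "pts h \<inter> fibre (\<phi> Q) = pts g \<inter> fibre (\<phi> Q)" by (rule block_eq[OF hL(1) g(1) hL(3)])
  show "\<phi> Q \<noteq> \<phi> P"
  proof
    assume "\<phi> Q = \<phi> P"
    then have "P \<in> pts h \<inter> fibre (\<phi> Q)" using hL P by (simp add: pts_def fibre_def)
    then have "P \<in> pts g" using bl by blast
    then show False using g(2) by (simp add: pts_def)
  qed
  have same_fibre: "\<phi> Q' = \<phi> Q" if "Q' \<in> pts h \<inter> pts g" for Q'
  proof (rule ccontr)
    assume "\<phi> Q' \<noteq> \<phi> Q"
    then have "h = g" using K_line_unique[of h g Q Q'] that Q hL g by (simp add: pts_def)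
    then show False using hL(2) g(2) by simp
  qed
  show "pts h \<inter> pts g = pts g \<inter> fibre (\<phi> Q)"
  proof (intro equalityI subsetI)
    fix x assume "x \<in> pts h \<inter> pts g"
    then show "x \<in> pts g \<inter> fibre (\<phi> Q)" using same_fibre by (auto simp: pts_def fibre_def)
  next
    fix x assume "x \<in> pts g \<inter> fibre (\<phi> Q)"
    then show "x \<in> pts h \<inter> pts g" using bl by blast
  qed
qed

lemma lines_at_meeting_eq_image:
  assumes P: "P \<in> PK" and g: "g \<in> LK" "AI (\<phi> P) (\<psi> g)" "\<not> IK P g"
  shows "{h\<in>lines_at P (\<psi> g). pts h \<inter> pts g \<noteq> {}} = kjoin P ` (pts g - fibre (\<phi> P))"
proof
  show "{h\<in>lines_at P (\<psi> g). pts h \<inter> pts g \<noteq> {}} \<subseteq> kjoin P ` (pts g - fibre (\<phi> P))"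
  proof
    fix h assume h: "h \<in> {h\<in>lines_at P (\<psi> g). pts h \<inter> pts g \<noteq> {}}"
    then obtain Q where Q: "Q \<in> pts h \<inter> pts g" by auto
    have "\<phi> Q \<noteq> \<phi> P" using common_points_eq_block(1)[OF P _ g(1,3) Q] h by blast
    then have "kjoin P Q = h" using kjoin_unique[of P Q h] P Q h by (auto simp: lines_at_def pts_def)
    then show "h \<in> kjoin P ` (pts g - fibre (\<phi> P))"
      using Q \<open>\<phi> Q \<noteq> \<phi> P\<close> by (auto simp: fibre_def)
  qed
  show "kjoin P ` (pts g - fibre (\<phi> P)) \<subseteq> {h\<in>lines_at P (\<psi> g). pts h \<inter> pts g \<noteq> {}}"
  proof
    fix h assume "h \<in> kjoin P ` (pts g - fibre (\<phi> P))"
    then obtain Q where Q: "Q \<in> pts g" "\<phi> Q \<noteq> \<phi> P" "h = kjoin P Q" by (auto simp: fibre_def pts_def)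
    have Qg: "Q \<in> PK" "IK Q g" using Q by (auto simp: pts_def)
    have "\<psi> h = join (\<phi> P) (\<phi> Q)" using psi_kjoin[OF P Qg(1)] Q(2,3) by simp
    also have "\<dots> = \<psi> g"
      using join_unique[OF phi_in_A[OF P] phi_in_A[OF Qg(1)] not_sym[OF Q(2)] psi_in_AL[OF g(1)] g(2)]
        inc_phi_psi[OF Qg(1) g(1) Qg(2)] by simp
    finally show "h \<in> {h\<in>lines_at P (\<psi> g). pts h \<inter> pts g \<noteq> {}}"
      using kjoin[of P Q] P Q by (auto simp: lines_at_def pts_def)
  qed
qed

text \<open>The lines through \<open>P\<close> over \<open>\<psi> g\<close> that meet \<open>g\<close> cut the \<open>t\<^sup>2 - t\<close> points of \<open>g\<close> outside
  the fibre of \<open>P\<close> into blocks of \<open>t\<close>.\<close>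
lemma card_lines_at_meeting:
  assumes P: "P \<in> PK" and g: "g \<in> LK" "AI (\<phi> P) (\<psi> g)" "\<not> IK P g"
  shows "card {h\<in>lines_at P (\<psi> g). pts h \<inter> pts g \<noteq> {}} = t - 1"
proof -
  define S where "S = pts g - fibre (\<phi> P)"
  obtain Q0 where "Q0 \<in> pts g \<inter> fibre (\<phi> P)" using line_meets_fibre g P phi_in_A by blast
  then have "Q0 \<in> pts g" "\<phi> Q0 = \<phi> P" by (auto simp: fibre_def)
  then have "card (pts g \<inter> fibre (\<phi> P)) = t" using card_block[OF g(1)] by metis
  then have "card S = t * t - t" using card_Diff_subset_Int[of "pts g" "fibre (\<phi> P)"] g
    by (simp add: S_def card_pts finite_block)
  moreover have "card S = t * card (kjoin P ` S)"
  proof (rule card_eq_mult_card_image)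
    show "finite S" using finite_pts g by (simp add: S_def)
    fix h assume "h \<in> kjoin P ` S"
    then have "h \<in> {h\<in>lines_at P (\<psi> g). pts h \<inter> pts g \<noteq> {}}"
      using lines_at_meeting_eq_image[OF P g] by (simp add: S_def)
    then obtain Q where h: "h \<in> lines_at P (\<psi> g)" and Q: "Q \<in> pts h \<inter> pts g" by blast
    have "{Q'\<in>S. kjoin P Q' = h} = pts h \<inter> pts g"
    proof
      show "{Q'\<in>S. kjoin P Q' = h} \<subseteq> pts h \<inter> pts g"
        using kjoin[OF P] by (auto simp: S_def pts_def)
      show "pts h \<inter> pts g \<subseteq> {Q'\<in>S. kjoin P Q' = h}"
      proof
        fix Q' assume Q': "Q' \<in> pts h \<inter> pts g"
        then have "\<phi> Q' \<noteq> \<phi> P" using common_points_eq_block(1)[OF P h g(1,3)] by blast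
        moreover have "kjoin P Q' = h"
          using kjoin_unique[of P Q' h] P Q' h \<open>\<phi> Q' \<noteq> \<phi> P\<close> by (auto simp: lines_at_def pts_def)
        ultimately show "Q' \<in> {Q'\<in>S. kjoin P Q' = h}" using Q' by (auto simp: S_def fibre_def)
      qed
    qed
    also have "\<dots> = pts g \<inter> fibre (\<phi> Q)" using common_points_eq_block(2)[OF P h g(1,3) Q] .
    finally show "card {Q'\<in>S. kjoin P Q' = h} = t" using card_block[OF g(1)] Q by simp
  qed
  ultimately have "t * (t - 1) = t * card (kjoin P ` S)" by (simp add: right_diff_distrib')
  then show ?thesis using lines_at_meeting_eq_image[OF P g] t_ge_2 by (simp add: S_def)
qed

lemma ex1_disjoint_line_at:
  assumes P: "P \<in> PK" and g: "g \<in> LK" "AI (\<phi> P) (\<psi> g)" "\<not> IK P g"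
  shows "\<exists>!h. h \<in> lines_at P (\<psi> g) \<and> pts h \<inter> pts g = {}"
proof -
  define L where "L = lines_at P (\<psi> g)"
  define M where "M = {h\<in>L. pts h \<inter> pts g \<noteq> {}}"
  have "M \<subseteq> L" by (auto simp: M_def)
  moreover have "finite L" "card L = t"
    using finite_lines_at card_lines_at P psi_in_AL[OF g(1)] g(2) by (simp_all add: L_def)
  moreover have "card M = t - 1" using card_lines_at_meeting[OF P g] by (simp add: M_def L_def)
  ultimately have "card (L - M) = 1" using card_Diff_subset[of M L] finite_subset t_ge_2 by fastforce
  then obtain h0 where h0: "L - M = {h0}" by (auto simp: card_Suc_eq)
  have "h \<in> L \<and> pts h \<inter> pts g = {} \<longleftrightarrow> h \<in> L - M" for h by (auto simp: M_def)
  then show ?thesis unfolding L_def[symmetric] h0 by auto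
qed

lemma pclass_memD: "h \<in> pclass g \<Longrightarrow> h \<in> LK \<and> \<psi> h = \<psi> g" by (auto simp: pclass_def)
lemma pclass_self: "g \<in> LK \<Longrightarrow> g \<in> pclass g" by (auto simp: pclass_def)

lemma pclass_disjoint:
  assumes g: "g \<in> LK" and h: "h \<in> pclass g" and k: "k \<in> pclass g" and ne: "h \<noteq> k"
  shows "pts h \<inter> pts k = {}"
proof (cases "h = g \<or> k = g")
  case True then show ?thesis using h k ne by (auto simp: pclass_def)
next
  case False
  show ?thesis
  proof (rule ccontr)
    assume "pts h \<inter> pts k \<noteq> {}"
    then obtain P where P: "P \<in> pts h" "P \<in> pts k" by blast
    have hk: "h \<in> LK" "k \<in> LK" "\<psi> h = \<psi> g" "\<psi> k = \<psi> g" "pts h \<inter> pts g = {}" "pts k \<inter> pts g = {}"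
      using h k False by (auto simp: pclass_def)
    have PK: "P \<in> PK" "IK P h" "IK P k" using P by (auto simp: pts_def)
    have Pg: "\<not> IK P g" using hk(5) P PK by (auto simp: pts_def)
    have "AI (\<phi> P) (\<psi> g)" using inc_phi_psi[of P h] PK hk by simp
    then have ex1: "\<exists>!h'. h' \<in> lines_at P (\<psi> g) \<and> pts h' \<inter> pts g = {}"
      using ex1_disjoint_line_at[OF PK(1) g _ Pg] by simp
    have "h \<in> lines_at P (\<psi> g) \<and> pts h \<inter> pts g = {}" "k \<in> lines_at P (\<psi> g) \<and> pts k \<inter> pts g = {}"
      using hk PK by (auto simp: lines_at_def)
    with ex1 have "h = k" by (elim ex1E) blast
    then show False using ne by simp
  qed
qed

lemma ex1_pclass_through:
  assumes g: "g \<in> LK" and P: "P \<in> PK" "AI (\<phi> P) (\<psi> g)"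
  shows "\<exists>!h. h \<in> pclass g \<and> IK P h"
proof (cases "IK P g")
  case True
  show ?thesis
  proof (rule ex1I[of _ g])
    show "g \<in> pclass g \<and> IK P g" using pclass_self g True by simp
    fix h assume h: "h \<in> pclass g \<and> IK P h"
    show "h = g"
    proof (rule ccontr)
      assume "h \<noteq> g"
      then have "pts h \<inter> pts g = {}" using h by (auto simp: pclass_def)
      then show False using h True P by (auto simp: pts_def)
    qed
  qed
next
  case False
  obtain h0 where h0: "h0 \<in> lines_at P (\<psi> g)" "pts h0 \<inter> pts g = {}"
    and u: "\<And>h. h \<in> lines_at P (\<psi> g) \<Longrightarrow> pts h \<inter> pts g = {} \<Longrightarrow> h = h0"
    using ex1_disjoint_line_at[OF P(1) g P(2) False] by blast
  show ?thesis
  proof (rule ex1I[of _ h0])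
    show "h0 \<in> pclass g \<and> IK P h0" using h0 by (auto simp: pclass_def lines_at_def)
    fix h assume h: "h \<in> pclass g \<and> IK P h"
    then have "h \<noteq> g" using False by auto
    then have "h \<in> LK" "\<psi> h = \<psi> g" "pts h \<inter> pts g = {}" using h by (auto simp: pclass_def)
    then show "h = h0" using h by (intro u) (auto simp: lines_at_def)
  qed
qed

lemma pclass_eq:
  assumes g: "g \<in> LK" and h: "h \<in> pclass g"
  shows "pclass h = pclass g"
proof -
  have hL: "h \<in> LK" "\<psi> h = \<psi> g" using h by (auto simp: pclass_def)
  have gh: "g \<in> pclass h" using h g by (auto simp: pclass_def)
  show ?thesis
  proof
    show "pclass h \<subseteq> pclass g"
    proof
      fix k assume k: "k \<in> pclass h"
      have "k = g \<or> pts k \<inter> pts g = {}" using pclass_disjoint[OF hL(1) k gh] by blast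
      then show "k \<in> pclass g" using k hL by (auto simp: pclass_def)
    qed
    show "pclass g \<subseteq> pclass h"
    proof
      fix k assume k: "k \<in> pclass g"
      have "k = h \<or> pts k \<inter> pts h = {}" using pclass_disjoint[OF g k h] by blast
      then show "k \<in> pclass h" using k hL by (auto simp: pclass_def)
    qed
  qed
qed

lemma two_common_points_if_not_pclass:
  assumes g: "g \<in> LK" and h: "h \<in> LK" "\<psi> h = \<psi> g" "h \<notin> pclass g"
  shows "\<exists>P Q. P \<noteq> Q \<and> P \<in> pts h \<inter> pts g \<and> Q \<in> pts h \<inter> pts g"
proof -
  obtain P where P: "P \<in> pts h" "P \<in> pts g" using h by (auto simp: pclass_def)
  have bl: "pts h \<inter> fibre (\<phi> P) = pts g \<inter> fibre (\<phi> P)" using block_eq[of h g P] g h P by auto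
  have "2 \<le> card (pts h \<inter> fibre (\<phi> P))" using card_block h P t_ge_2 by simp
  then obtain Q where "Q \<in> pts h \<inter> fibre (\<phi> P)" "Q \<noteq> P"
    using other_element_if_card_ge_2[of "pts h \<inter> fibre (\<phi> P)" P] by blast
  then show ?thesis using bl P by blast
qed

lemma card_pclass:
  assumes g: "g \<in> LK"
  shows "card (pclass g) = t"
proof -
  obtain x where x: "x \<in> apts (\<psi> g)" using two_points_on_line[OF psi_in_AL[OF g]] by blast
  then have x: "x \<in> A" "AI x (\<psi> g)" by (auto simp: apts_def)
  define f where "f Q = (THE h. h \<in> pclass g \<and> IK Q h)" for Q
  have fQ: "\<And>Q. Q \<in> fibre x \<Longrightarrow> f Q \<in> pclass g \<and> IK Q (f Q)"
    unfolding f_def by (rule theI') (use ex1_pclass_through g x in \<open>auto simp: fibre_def\<close>)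
  have fU: "\<And>Q h. Q \<in> fibre x \<Longrightarrow> h \<in> pclass g \<Longrightarrow> IK Q h \<Longrightarrow> f Q = h"
    unfolding f_def by (rule the1_equality) (use ex1_pclass_through g x in \<open>auto simp: fibre_def\<close>)
  have img: "f ` fibre x = pclass g"
  proof
    show "f ` fibre x \<subseteq> pclass g" using fQ by auto
    show "pclass g \<subseteq> f ` fibre x"
    proof
      fix h assume h: "h \<in> pclass g"
      then have "AI x (\<psi> h)" using x by (auto simp: pclass_def)
      then obtain Q where Q: "Q \<in> pts h \<inter> fibre x" using line_meets_fibre[of h x] h x by (auto simp: pclass_def)
      then have "f Q = h" using fU h by (auto simp: pts_def)
      then show "h \<in> f ` fibre x" using Q by auto
    qed
  qed
  have "card (fibre x) = t * card (f ` fibre x)"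
  proof (rule card_eq_mult_card_image)
    show "finite (fibre x)" using finite_fibre x by simp
    fix h assume "h \<in> f ` fibre x"
    then obtain Q0 where Q0: "Q0 \<in> fibre x" "h = f Q0" by auto
    have h: "h \<in> pclass g" "IK Q0 h" using fQ Q0 by auto
    have hL: "h \<in> LK" using h pclass_memD by blast
    have "{Q \<in> fibre x. f Q = h} = pts h \<inter> fibre x"
      using fQ fU h by (auto simp: pts_def fibre_def)
    moreover have "Q0 \<in> pts h" "\<phi> Q0 = x" using h Q0 by (auto simp: pts_def fibre_def)
    ultimately show "card {Q \<in> fibre x. f Q = h} = t" using card_block[OF hL] by auto
  qed
  then show ?thesis using img card_fibre x t_ge_2 by simp
qed

definition "pclasses m = pclass ` {g\<in>LK. \<psi> g = m}"

lemma card_pclasses: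
  assumes m: "m \<in> AL"
  shows "card (pclasses m) = t"
proof -
  obtain g0 where g0: "g0 \<in> LK" "\<psi> g0 = m" using m psi_onto by auto
  obtain x where x: "x \<in> apts m" using apts_card[OF m] t_ge_2 by fastforce
  obtain P where P: "P \<in> fibre x" using fibre_nonempty x by (auto simp: apts_def)
  have PK: "P \<in> PK" "AI (\<phi> P) m" using P x by (auto simp: fibre_def apts_def)
  have "bij_betw pclass (lines_at P m) (pclasses m)"
  proof (rule bij_betw_imageI)
    show "inj_on pclass (lines_at P m)"
    proof (rule inj_onI)
      fix h k assume hk: "h \<in> lines_at P m" "k \<in> lines_at P m" "pclass h = pclass k"
      have L: "h \<in> LK" "k \<in> LK" "IK P h" "IK P k" using hk by (auto simp: lines_at_def)
      then have "k \<in> pclass h" using hk(3) pclass_self by auto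
      show "h = k"
      proof (rule ccontr)
        assume "h \<noteq> k"
        then have "pts h \<inter> pts k = {}" using \<open>k \<in> pclass h\<close> by (auto simp: pclass_def)
        then show False using L PK by (auto simp: pts_def)
      qed
    qed
    show "pclass ` lines_at P m = pclasses m"
    proof
      show "pclass ` lines_at P m \<subseteq> pclasses m" by (auto simp: lines_at_def pclasses_def)
      show "pclasses m \<subseteq> pclass ` lines_at P m"
      proof
        fix c assume "c \<in> pclasses m"
        then obtain g where g: "g \<in> LK" "\<psi> g = m" "c = pclass g" by (auto simp: pclasses_def)
        then obtain h where h: "h \<in> pclass g" "IK P h" using ex1_pclass_through[of g P] PK by auto
        have "pclass h = c" using pclass_eq g h by simp
        moreover have "h \<in> lines_at P m" using h g by (auto simp: lines_at_def pclass_def)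
        ultimately show "c \<in> pclass ` lines_at P m" by blast
      qed
    qed
  qed
  then show ?thesis using card_lines_at PK bij_betw_same_card m by metis
qed

lemma finite_pclasses: "m \<in> AL \<Longrightarrow> finite (pclasses m)" using card_pclasses t_ge_2 card.infinite by fastforce

definition "turn d = (SOME f. bij_betw f d (Dirs - {d}))"
definition "class_line m = (SOME f. bij_betw f (pclasses m) (turn (dir m) m))"
definition "far_line g = class_line (\<psi> g) (pclass g)"

lemma turn:
  assumes d: "d \<in> Dirs"
  shows "bij_betw (turn d) d (Dirs - {d})"
proof -
  have "card d = card (Dirs - {d})" using card_Dirs_elem[OF d] card_Dirs d finite_Dirs by simp
  moreover have "finite d" using card_Dirs_elem[OF d] t_ge_2 card.infinite by fastforce
  ultimately have "\<exists>f. bij_betw f d (Dirs - {d})" using finite_same_card_bij finite_Dirs by blast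
  then show ?thesis unfolding turn_def by (rule someI_ex)
qed

lemma turn_dir:
  assumes m: "m \<in> AL"
  shows "turn (dir m) m \<in> Dirs" "turn (dir m) m \<noteq> dir m"
  using turn[OF dir_in_Dirs[OF m]] in_dir[OF m] by (auto simp: bij_betw_def)

lemma class_line:
  assumes m: "m \<in> AL"
  shows "bij_betw (class_line m) (pclasses m) (turn (dir m) m)"
proof -
  have "card (pclasses m) = card (turn (dir m) m)" using card_pclasses[OF m] card_Dirs_elem turn_dir[OF m] by simp
  then have "\<exists>f. bij_betw f (pclasses m) (turn (dir m) m)"
    using finite_same_card_bij finite_pclasses[OF m] card_Dirs_elem turn_dir[OF m] t_ge_2 card.infinite
    by (metis not_numeral_le_zero)
  then show ?thesis unfolding class_line_def by (rule someI_ex)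
qed

lemma pclass_in_pclasses: "g \<in> LK \<Longrightarrow> pclass g \<in> pclasses (\<psi> g)" by (auto simp: pclasses_def)

lemma far_line_in_turn:
  assumes g: "g \<in> LK"
  shows "far_line g \<in> turn (dir (\<psi> g)) (\<psi> g)"
  using class_line[OF psi_in_AL[OF g]] pclass_in_pclasses[OF g] by (auto simp: far_line_def bij_betw_def)

lemma far_line_in_AL:
  assumes g: "g \<in> LK"
  shows "far_line g \<in> AL"
  using far_line_in_turn[OF g] turn_dir[OF psi_in_AL[OF g]] Dirs_subset by blast

lemma dir_far_line:
  assumes g: "g \<in> LK"
  shows "dir (far_line g) = turn (dir (\<psi> g)) (\<psi> g)"
  using far_line_in_turn[OF g] turn_dir[OF psi_in_AL[OF g]] dir_eq_if_mem by blast

lemma dir_far_line_neq: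
  assumes g: "g \<in> LK"
  shows "dir (far_line g) \<noteq> dir (\<psi> g)"
  using dir_far_line[OF g] turn_dir[OF psi_in_AL[OF g]] by simp

lemma far_line_eq_iff:
  assumes g: "g \<in> LK" "h \<in> LK" "\<psi> g = \<psi> h"
  shows "far_line g = far_line h \<longleftrightarrow> h \<in> pclass g"
proof -
  have inj: "inj_on (class_line (\<psi> g)) (pclasses (\<psi> g))" using class_line[OF psi_in_AL[OF g(1)]] by (simp add: bij_betw_def)
  have "pclass g \<in> pclasses (\<psi> g)" "pclass h \<in> pclasses (\<psi> g)" using pclass_in_pclasses[OF g(1)] pclass_in_pclasses[OF g(2)] g(3) by auto
  then have "far_line g = far_line h \<longleftrightarrow> pclass g = pclass h"
    using inj_onD[OF inj] g(3) unfolding far_line_def by metis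
  also have "\<dots> \<longleftrightarrow> h \<in> pclass g"
    using pclass_eq[OF g(1)] pclass_self g by metis
  finally show ?thesis .
qed

lemma far_lines_not_apar:
  assumes g: "g \<in> LK" "h \<in> LK" "dir (\<psi> g) = dir (\<psi> h)" "\<psi> g \<noteq> \<psi> h"
  shows "\<not> apar (far_line g) (far_line h)"
proof -
  have inj: "inj_on (turn (dir (\<psi> g))) (dir (\<psi> g))" using turn[OF dir_in_Dirs[OF psi_in_AL[OF g(1)]]] by (simp add: bij_betw_def)
  have "\<psi> h \<in> dir (\<psi> g)" using g in_dir psi_in_AL by auto
  then have "turn (dir (\<psi> g)) (\<psi> g) \<noteq> turn (dir (\<psi> g)) (\<psi> h)"
    using inj_onD[OF inj] g in_dir psi_in_AL by blast
  then have "dir (far_line g) \<noteq> dir (far_line h)" using dir_far_line g by simp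
  then show ?thesis using dir_eq_iff_apar far_line_in_AL g by blast
qed

lemma far_line_surj:
  assumes m: "m \<in> AL" and l: "l \<in> turn (dir m) m"
  shows "\<exists>g\<in>LK. \<psi> g = m \<and> far_line g = l"
proof -
  have "l \<in> class_line m ` pclasses m" using class_line[OF m] l by (simp add: bij_betw_def)
  then obtain c where c: "c \<in> pclasses m" "class_line m c = l" by blast
  then obtain g where g: "g \<in> LK" "\<psi> g = m" "c = pclass g" by (auto simp: pclasses_def)
  then show ?thesis using c by (auto simp: far_line_def)
qed

section \<open>The projective extension\<close>

fun ext_inc :: "'a + ('b set \<times> 'a) \<Rightarrow> 'b + 'a \<Rightarrow> bool" where
  "ext_inc (Inl p) (Inl g) = IK p g"
| "ext_inc (Inr (d, a)) (Inl g) = (d = dir (\<psi> g) \<and> AI a (far_line g))"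
| "ext_inc (Inr (d, a)) (Inr n) = AI a (dline d n)"
| "ext_inc (Inl p) (Inr n) = False"

definition "ext_pts = Inl ` PK \<union> Inr ` (Dirs \<times> A)"
definition "ext_lines = Inl ` LK \<union> Inr ` A"

lemma ext_lines_through_Inl_Inl:
  "(L \<in> ext_lines \<and> ext_inc (Inl p) L \<and> ext_inc (Inl q) L) \<longleftrightarrow>
    (\<exists>g. L = Inl g \<and> g \<in> LK \<and> IK p g \<and> IK q g)"
  by (cases L) (auto simp: ext_lines_def)

lemma ex1_ext_line_Inl_Inr:
  assumes p: "p \<in> PK" and d: "d \<in> Dirs" and a: "a \<in> A"
  shows "\<exists>!L. L \<in> ext_lines \<and> ext_inc (Inl p) L \<and> ext_inc (Inr (d, a)) L"
proof -
  define x where "x = \<phi> p"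
  have x: "x \<in> A" using phi_in_A p by (simp add: x_def)
  define m where "m = dline d x"
  have m: "m \<in> AL" "AI x m" "m \<in> d" "dir m = d" using dline[OF d x] dir_dline[OF d x] by (auto simp: m_def)
  define l where "l = dline (turn d m) a"
  have bd: "turn d m \<in> Dirs" using turn_dir[OF m(1)] m(4) by simp
  have l: "l \<in> turn d m" "AI a l" using dline[OF bd a] by (auto simp: l_def)
  obtain g0 where g0: "g0 \<in> LK" "\<psi> g0 = m" "far_line g0 = l" using far_line_surj[OF m(1)] l m(4) by auto
  obtain h where h: "h \<in> pclass g0" "IK p h" using ex1_pclass_through[OF g0(1) p] g0 m by (auto simp: x_def)
  have hL: "h \<in> LK" "\<psi> h = m" "far_line h = l" using pclass_memD[OF h(1)] far_line_eq_iff[of g0 h] g0 h by auto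
  show ?thesis
  proof (rule ex1I[of _ "Inl h"])
    show "Inl h \<in> ext_lines \<and> ext_inc (Inl p) (Inl h) \<and> ext_inc (Inr (d, a)) (Inl h)"
      using hL h l m by (auto simp: ext_lines_def)
    fix L assume L: "L \<in> ext_lines \<and> ext_inc (Inl p) L \<and> ext_inc (Inr (d, a)) L"
    then obtain g where g: "L = Inl g" "g \<in> LK" "IK p g" "dir (\<psi> g) = d" "AI a (far_line g)"
      by (cases L) (auto simp: ext_lines_def)
    have "\<psi> g \<in> d" using in_dir[OF psi_in_AL[OF g(2)]] g by simp
    then have pg: "\<psi> g = m" using dline_unique[OF d x] inc_phi_psi[of p g] p g by (auto simp: m_def x_def)
    have "far_line g \<in> turn d m" using far_line_in_turn[OF g(2)] pg g by simp
    then have "far_line g = l" using dline_unique[OF bd a] g by (auto simp: l_def)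
    then have "h \<in> pclass g" using far_line_eq_iff[of g h] g hL pg by simp
    have "h = g"
    proof (rule ccontr)
      assume "h \<noteq> g"
      then have "pts h \<inter> pts g = {}" using \<open>h \<in> pclass g\<close> by (auto simp: pclass_def)
      then show False using g h p by (auto simp: pts_def)
    qed
    then show "L = Inl h" using g by simp
  qed
qed

lemma two_lines_with_far_line:
  assumes d: "d \<in> Dirs" and j: "j \<in> AL" "dir j \<noteq> d"
  shows "\<exists>g1 g2. g1 \<noteq> g2 \<and> g1 \<in> LK \<and> g2 \<in> LK \<and> dir (\<psi> g1) = d \<and> dir (\<psi> g2) = d \<and>
    far_line g1 = j \<and> far_line g2 = j"
proof -
  have "dir j \<in> turn d ` d" using turn[OF d] j dir_in_Dirs by (simp add: bij_betw_def)
  then obtain m where m: "m \<in> d" "turn d m = dir j" by blast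
  have mL: "m \<in> AL" "dir m = d" using m Dirs_subset d dir_eq_if_mem by auto
  then have "j \<in> turn (dir m) m" using m in_dir j by simp
  then obtain g0 where g0: "g0 \<in> LK" "\<psi> g0 = m" "far_line g0 = j" using far_line_surj[OF mL(1)] by blast
  have "2 \<le> card (pclass g0)" using card_pclass g0 t_ge_2 by simp
  then obtain g1 g2 where g12: "g1 \<noteq> g2" "g1 \<in> pclass g0" "g2 \<in> pclass g0"
    using two_elements_if_card_ge_2[of "pclass g0"] by blast
  then have "g1 \<in> LK" "\<psi> g1 = m" "g2 \<in> LK" "\<psi> g2 = m" using pclass_memD g0 by auto
  moreover have "far_line g1 = j" "far_line g2 = j"
    using far_line_eq_iff[of g0 g1] far_line_eq_iff[of g0 g2] g0 g12 calculation by simp_all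
  ultimately show ?thesis using g12(1) mL by (intro exI[of _ g1] exI[of _ g2]) simp
qed

lemma two_ext_lines_Inr_same_dir:
  assumes d: "d \<in> Dirs" and a: "a \<in> A" "a' \<in> A" "a \<noteq> a'"
  shows "\<exists>L1 L2. L1 \<noteq> L2 \<and> L1 \<in> ext_lines \<and> L2 \<in> ext_lines \<and>
    ext_inc (Inr (d, a)) L1 \<and> ext_inc (Inr (d, a')) L1 \<and> ext_inc (Inr (d, a)) L2 \<and> ext_inc (Inr (d, a')) L2"
proof (cases "AI a' (dline d a)")
  case True
  obtain n1 n2 where n: "n1 \<noteq> n2" "n1 \<in> apts (dline d a)" "n2 \<in> apts (dline d a)"
    using two_points_on_line dline[OF d a(1)] by blast
  have "dline d n = dline d a" if "n \<in> apts (dline d a)" for n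
    using on_dline_iff[OF d a(1)] that by (auto simp: apts_def)
  then have "ext_inc (Inr (d, a)) (Inr n1) \<and> ext_inc (Inr (d, a')) (Inr n1) \<and>
      ext_inc (Inr (d, a)) (Inr n2) \<and> ext_inc (Inr (d, a')) (Inr n2)"
    using n True dline[OF d a(1)] by auto
  moreover have "Inr n1 \<in> ext_lines" "Inr n2 \<in> ext_lines" using n by (auto simp: ext_lines_def apts_def)
  ultimately show ?thesis using n(1) by blast
next
  case False
  define j where "j = join a a'"
  have j: "j \<in> AL" "AI a j" "AI a' j" using join a by (auto simp: j_def)
  have "dir j \<noteq> d"
  proof
    assume "dir j = d"
    then have "dline d a = j" using dline_unique[OF d a(1)] in_dir j by auto
    then show False using False j by simp
  qed
  then obtain g1 g2 where "g1 \<noteq> g2" "g1 \<in> LK" "g2 \<in> LK" "dir (\<psi> g1) = d" "dir (\<psi> g2) = d"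
      "far_line g1 = j" "far_line g2 = j"
    using two_lines_with_far_line d j by blast
  then show ?thesis using j by (intro exI[of _ "Inl g1"] exI[of _ "Inl g2"]) (auto simp: ext_lines_def)
qed

lemma ex1_ext_line_Inr_Inr:
  assumes d: "d \<in> Dirs" "d' \<in> Dirs" "d \<noteq> d'" and a: "a \<in> A" "a' \<in> A"
  shows "\<exists>!L. L \<in> ext_lines \<and> ext_inc (Inr (d, a)) L \<and> ext_inc (Inr (d', a')) L"
proof -
  have "dir (dline d a) \<noteq> dir (dline d' a')" using dir_dline d a by simp
  then have np: "\<not> apar (dline d a) (dline d' a')" using dir_eq_iff_apar dline(1) d a by blast
  then obtain n where n: "n \<in> A" "AI n (dline d a)" "AI n (dline d' a')"
    and nu: "\<And>n'. n' \<in> A \<Longrightarrow> AI n' (dline d a) \<Longrightarrow> AI n' (dline d' a') \<Longrightarrow> n' = n"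
    using ex1_meet_if_not_apar[of "dline d a" "dline d' a'"] dline(1) d a by blast
  show ?thesis
  proof (rule ex1I[of _ "Inr n"])
    show "Inr n \<in> ext_lines \<and> ext_inc (Inr (d, a)) (Inr n) \<and> ext_inc (Inr (d', a')) (Inr n)"
      using n on_dline_sym d a by (auto simp: ext_lines_def)
    fix L assume L: "L \<in> ext_lines \<and> ext_inc (Inr (d, a)) L \<and> ext_inc (Inr (d', a')) L"
    then obtain n' where "L = Inr n'" "n' \<in> A" "AI a (dline d n')" "AI a' (dline d' n')" using d
      by (cases L) (auto simp: ext_lines_def)
    then have "AI n' (dline d a)" "AI n' (dline d' a')" using on_dline_sym d a by auto
    then show "L = Inr n" using nu \<open>L = Inr n'\<close> \<open>n' \<in> A\<close> by simp
  qed
qed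

fun ext_phi :: "'a + ('b set \<times> 'a) \<Rightarrow> 'a + 'b set" where
  "ext_phi (Inl p) = Inl (\<phi> p)"
| "ext_phi (Inr (d, a)) = Inr d"

lemma ext_pt_nb_Inl_Inl:
  assumes "p \<in> PK" "q \<in> PK"
  shows "pt_nb ext_pts ext_lines ext_inc (Inl p) (Inl q) \<longleftrightarrow> \<phi> p = \<phi> q"
proof -
  have "pt_nb ext_pts ext_lines ext_inc (Inl p) (Inl q) \<longleftrightarrow> pt_nb PK LK IK p q"
  proof
    assume "pt_nb ext_pts ext_lines ext_inc (Inl p) (Inl q)"
    then consider "p = q" | L1 L2 where "L1 \<in> ext_lines" "L2 \<in> ext_lines" "L1 \<noteq> L2" "ext_inc (Inl p) L1" "ext_inc (Inl q) L1" "ext_inc (Inl p) L2" "ext_inc (Inl q) L2"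
      unfolding pt_nb_def by blast
    then show "pt_nb PK LK IK p q"
    proof cases
      case 1 then show ?thesis by (simp add: pt_nb_def)
    next
      case 2
      then obtain g1 g2 where "L1 = Inl g1" "g1 \<in> LK" "IK p g1" "IK q g1" "L2 = Inl g2" "g2 \<in> LK" "IK p g2" "IK q g2"
        using ext_lines_through_Inl_Inl by metis
      then show ?thesis using 2 unfolding pt_nb_def by blast
    qed
  next
    assume "pt_nb PK LK IK p q"
    then consider "p = q" | g1 g2 where "g1 \<in> LK" "g2 \<in> LK" "g1 \<noteq> g2" "IK p g1" "IK q g1" "IK p g2" "IK q g2"
      unfolding pt_nb_def by blast
    then show "pt_nb ext_pts ext_lines ext_inc (Inl p) (Inl q)"
    proof cases
      case 1 then show ?thesis by (simp add: pt_nb_def)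
    next
      case 2
      have "Inl g1 \<in> ext_lines" "Inl g2 \<in> ext_lines" using 2 by (auto simp: ext_lines_def)
      then show ?thesis using 2 unfolding pt_nb_def by (intro disjI2) (rule bexI[of _ "Inl g1"], rule bexI[of _ "Inl g2"], auto)
    qed
  qed
  then show ?thesis using phi_eq_iff_pt_nb assms by simp
qed

lemma not_ext_pt_nb_Inl_Inr:
  assumes "p \<in> PK" "d \<in> Dirs" "a \<in> A"
  shows "\<not> pt_nb ext_pts ext_lines ext_inc (Inl p) (Inr (d, a))"
  using ex1_ext_line_Inl_Inr[OF assms] unfolding pt_nb_def by blast

lemma ext_pt_nb_Inr_Inr:
  assumes "d \<in> Dirs" "d' \<in> Dirs" "a \<in> A" "a' \<in> A"
  shows "pt_nb ext_pts ext_lines ext_inc (Inr (d, a)) (Inr (d', a')) \<longleftrightarrow> d = d'"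
proof (cases "d = d'")
  case True
  show ?thesis
  proof (cases "a = a'")
    case True then show ?thesis using \<open>d = d'\<close> by (simp add: pt_nb_def)
  next
    case False
    then show ?thesis using two_ext_lines_Inr_same_dir[OF assms(1) assms(3,4) False] True unfolding pt_nb_def by blast
  qed
next
  case False
  then show ?thesis using ex1_ext_line_Inr_Inr[OF assms(1,2) False assms(3,4)] unfolding pt_nb_def by auto
qed

lemma ext_pt_nb_iff:
  assumes "X \<in> ext_pts" "Y \<in> ext_pts"
  shows "pt_nb ext_pts ext_lines ext_inc X Y \<longleftrightarrow> ext_phi X = ext_phi Y"
proof -
  consider p q where "X = Inl p" "Y = Inl q" "p \<in> PK" "q \<in> PK"
    | p d a where "X = Inl p" "Y = Inr (d, a)" "p \<in> PK" "d \<in> Dirs" "a \<in> A"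
    | p d a where "Y = Inl p" "X = Inr (d, a)" "p \<in> PK" "d \<in> Dirs" "a \<in> A"
    | d a d' a' where "X = Inr (d, a)" "Y = Inr (d', a')" "d \<in> Dirs" "a \<in> A" "d' \<in> Dirs" "a' \<in> A"
    using assms by (auto simp: ext_pts_def)
  then show ?thesis
  proof cases
    case 1 then show ?thesis using ext_pt_nb_Inl_Inl by simp
  next
    case 2 then show ?thesis using not_ext_pt_nb_Inl_Inr by simp
  next
    case 3 then show ?thesis using not_ext_pt_nb_Inl_Inr[of p d a] pt_nb_sym[of ext_pts ext_lines ext_inc X Y] by simp
  next
    case 4 then show ?thesis using ext_pt_nb_Inr_Inr by simp
  qed
qed

fun ext_psi :: "'b + 'a \<Rightarrow> 'b + unit" where
  "ext_psi (Inl g) = Inl (\<psi> g)"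
| "ext_psi (Inr n) = Inr ()"

lemma ext_pts_on_Inl:
  assumes g: "g \<in> LK"
  shows "{X\<in>ext_pts. ext_inc X (Inl g)} = Inl ` pts g \<union> Inr ` ({dir (\<psi> g)} \<times> apts (far_line g))"
proof -
  have "dir (\<psi> g) \<in> Dirs" using dir_in_Dirs psi_in_AL g by blast
  then show ?thesis by (auto simp: ext_pts_def pts_def apts_def elim: ext_inc.elims)
qed

lemma ext_pts_on_Inr:
  assumes n: "n \<in> A"
  shows "{X\<in>ext_pts. ext_inc X (Inr n)} = Inr ` (SIGMA d:Dirs. apts (dline d n))"
  using dline by (auto simp: ext_pts_def apts_def)

lemma ext_ln_nb_Inl_Inl:
  assumes g: "g \<in> LK" "h \<in> LK" "\<psi> g = \<psi> h"
  shows "ln_nb ext_pts ext_lines ext_inc (Inl g) (Inl h)"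
proof (cases "h \<in> pclass g")
  case True
  then have L: "far_line g = far_line h" using far_line_eq_iff g by simp
  obtain a1 a2 where a: "a1 \<noteq> a2" "a1 \<in> apts (far_line g)" "a2 \<in> apts (far_line g)" using two_points_on_line far_line_in_AL g by blast
  have d: "dir (\<psi> g) \<in> Dirs" using dir_in_Dirs psi_in_AL g by blast
  have "Inr (dir (\<psi> g), a1) \<in> ext_pts" "Inr (dir (\<psi> g), a2) \<in> ext_pts" using a d by (auto simp: ext_pts_def apts_def)
  moreover have "ext_inc (Inr (dir (\<psi> g), a1)) (Inl g)" "ext_inc (Inr (dir (\<psi> g), a2)) (Inl g)"
    "ext_inc (Inr (dir (\<psi> g), a1)) (Inl h)" "ext_inc (Inr (dir (\<psi> g), a2)) (Inl h)"
    using a L g by (auto simp: apts_def)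
  ultimately show ?thesis using a(1) unfolding ln_nb_def by blast
next
  case False
  then obtain P Q where PQ: "P \<noteq> Q" "P \<in> pts h \<inter> pts g" "Q \<in> pts h \<inter> pts g" using two_common_points_if_not_pclass g by metis
  have "Inl P \<in> ext_pts" "Inl Q \<in> ext_pts" using PQ by (auto simp: ext_pts_def pts_def)
  moreover have "ext_inc (Inl P) (Inl g)" "ext_inc (Inl Q) (Inl g)" "ext_inc (Inl P) (Inl h)" "ext_inc (Inl Q) (Inl h)"
    using PQ by (auto simp: pts_def)
  ultimately show ?thesis using PQ(1) unfolding ln_nb_def by blast
qed

text \<open>Two old lines over different affine lines of one class share the point at infinity of the
  class, and nothing else: their far lines have different directions.\<close>
lemma ext_common_point_unique:
  assumes g: "g \<in> LK" "h \<in> LK" "\<psi> g \<noteq> \<psi> h" and a: "a \<in> A"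
    and da: "ext_inc (Inr (d, a)) (Inl g)" "ext_inc (Inr (d, a)) (Inl h)"
    and Z: "Z \<in> ext_pts" "ext_inc Z (Inl g)" "ext_inc Z (Inl h)"
  shows "Z = Inr (d, a)"
proof -
  have dd: "dir (\<psi> g) = dir (\<psi> h)" "AI a (far_line g)" "AI a (far_line h)" using da by auto
  have np: "\<not> apar (far_line g) (far_line h)" using far_lines_not_apar g dd by blast
  have par: "apar (\<psi> g) (\<psi> h)" using dir_eq_iff_apar psi_in_AL g dd by blast
  show ?thesis
  proof (cases Z)
    case (Inl P)
    then have "P \<in> PK" "IK P g" "IK P h" using Z by (auto simp: ext_pts_def)
    then show ?thesis
      using inc_phi_psi[of P g] inc_phi_psi[of P h] g par apar_eq_if_common_point phi_in_A by blast
  next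
    case (Inr c)
    then obtain d' a' where c: "Z = Inr (d', a')" "a' \<in> A" using Z by (auto simp: ext_pts_def)
    then have "d' = d" "AI a' (far_line g)" "AI a' (far_line h)" using Z da by auto
    moreover have "far_line g \<noteq> far_line h" using np apar_refl by metis
    ultimately have "a' = a"
      using line_eq_if_two_common_points[of a a' "far_line g" "far_line h"] a c far_line_in_AL g dd by auto
    then show ?thesis using c \<open>d' = d\<close> by simp
  qed
qed

lemma not_ext_ln_nb_Inl_Inl:
  assumes g: "g \<in> LK" "h \<in> LK" "\<psi> g \<noteq> \<psi> h"
  shows "\<not> ln_nb ext_pts ext_lines ext_inc (Inl g) (Inl h)"
proof
  assume "ln_nb ext_pts ext_lines ext_inc (Inl g) (Inl h)"
  then obtain X Y where XY: "X \<in> ext_pts" "Y \<in> ext_pts" "X \<noteq> Y" "ext_inc X (Inl g)" "ext_inc Y (Inl g)"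
      "ext_inc X (Inl h)" "ext_inc Y (Inl h)"
    using g unfolding ln_nb_def by auto
  show False
  proof (cases "\<exists>d a. X = Inr (d, a) \<or> Y = Inr (d, a)")
    case True
    then obtain d a where "X = Inr (d, a) \<or> Y = Inr (d, a)" by blast
    then show False
    proof
      assume X: "X = Inr (d, a)"
      then have "a \<in> A" using XY(1) by (auto simp: ext_pts_def)
      then have "Y = X" using ext_common_point_unique[OF g _ _ _ XY(2,5,7)] XY(4,6) X by blast
      then show False using XY(3) by simp
    next
      assume Y: "Y = Inr (d, a)"
      then have "a \<in> A" using XY(2) by (auto simp: ext_pts_def)
      then have "X = Y" using ext_common_point_unique[OF g _ _ _ XY(1,4,6)] XY(5,7) Y by blast
      then show False using XY(3) by simp
    qed
  next
    case False
    then obtain P Q where "X = Inl P" "Y = Inl Q" by (metis sumE surj_pair)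
    then have "P \<in> PK" "Q \<in> PK" "IK P g" "IK Q g" "IK P h" "IK Q h" "P \<noteq> Q"
      using XY by (auto simp: ext_pts_def)
    then show False using K_meet_unique g by blast
  qed
qed

lemma not_ext_ln_nb_Inl_Inr:
  assumes g: "g \<in> LK" and n: "n \<in> A"
  shows "\<not> ln_nb ext_pts ext_lines ext_inc (Inl g) (Inr n)"
proof
  assume "ln_nb ext_pts ext_lines ext_inc (Inl g) (Inr n)"
  then obtain X Y where XY: "X \<in> ext_pts" "Y \<in> ext_pts" "X \<noteq> Y" "ext_inc X (Inl g)" "ext_inc Y (Inl g)" "ext_inc X (Inr n)" "ext_inc Y (Inr n)"
    unfolding ln_nb_def by auto
  obtain d a where X: "X = Inr (d, a)" "d \<in> Dirs" "a \<in> A" using XY by (cases X) (auto simp: ext_pts_def)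
  obtain d' a' where Y: "Y = Inr (d', a')" "d' \<in> Dirs" "a' \<in> A" using XY by (cases Y) (auto simp: ext_pts_def)
  have e: "d = dir (\<psi> g)" "d' = dir (\<psi> g)" "AI a (far_line g)" "AI a' (far_line g)" "AI a (dline d n)" "AI a' (dline d n)"
    using XY X Y by auto
  have "a \<noteq> a'" using XY X Y e by auto
  then have "far_line g = dline d n" using line_eq_if_two_common_points[of a a' "far_line g" "dline d n"] e X Y far_line_in_AL g dline n by auto
  then have "dir (far_line g) = d" using dir_dline X n by simp
  then show False using dir_far_line_neq g e by simp
qed

lemma ext_ln_nb_Inr_Inr:
  assumes n: "n \<in> A" "n' \<in> A"
  shows "ln_nb ext_pts ext_lines ext_inc (Inr n) (Inr n')"
proof (cases "n = n'")
  case True then show ?thesis by (simp add: ln_nb_def)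
next
  case False
  define j where "j = join n n'"
  have j: "j \<in> AL" "AI n j" "AI n' j" using join n False by (auto simp: j_def)
  define d where "d = dir j"
  have d: "d \<in> Dirs" "j \<in> d" using dir_in_Dirs in_dir j by (auto simp: d_def)
  have e: "dline d n = j" "dline d n' = j" using dline_unique d n j by auto
  obtain a1 a2 where a: "a1 \<noteq> a2" "a1 \<in> apts j" "a2 \<in> apts j" using two_points_on_line j by blast
  have "Inr (d, a1) \<in> ext_pts" "Inr (d, a2) \<in> ext_pts" using a d by (auto simp: ext_pts_def apts_def)
  moreover have "ext_inc (Inr (d, a1)) (Inr n)" "ext_inc (Inr (d, a2)) (Inr n)" "ext_inc (Inr (d, a1)) (Inr n')" "ext_inc (Inr (d, a2)) (Inr n')"
    using a e by (auto simp: apts_def)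
  ultimately show ?thesis using a(1) unfolding ln_nb_def by blast
qed

lemma ext_ln_nb_iff:
  assumes "L \<in> ext_lines" "M \<in> ext_lines"
  shows "ln_nb ext_pts ext_lines ext_inc L M \<longleftrightarrow> ext_psi L = ext_psi M"
proof -
  consider g h where "L = Inl g" "M = Inl h" "g \<in> LK" "h \<in> LK"
    | g n where "L = Inl g" "M = Inr n" "g \<in> LK" "n \<in> A"
    | g n where "M = Inl g" "L = Inr n" "g \<in> LK" "n \<in> A"
    | n n' where "L = Inr n" "M = Inr n'" "n \<in> A" "n' \<in> A"
    using assms by (auto simp: ext_lines_def)
  then show ?thesis
  proof cases
    case 1 then show ?thesis using ext_ln_nb_Inl_Inl not_ext_ln_nb_Inl_Inl by (cases "\<psi> g = \<psi> h") auto
  next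
    case 2 then show ?thesis using not_ext_ln_nb_Inl_Inr by simp
  next
    case 3 then show ?thesis using not_ext_ln_nb_Inl_Inr[of g n] ln_nb_sym[of ext_pts ext_lines ext_inc L M] by simp
  next
    case 4 then show ?thesis using ext_ln_nb_Inr_Inr by simp
  qed
qed

lemma ext_join:
  assumes "X \<in> ext_pts" "Y \<in> ext_pts" shows "\<exists>L\<in>ext_lines. ext_inc X L \<and> ext_inc Y L"
proof -
  consider p q where "X = Inl p" "Y = Inl q" "p \<in> PK" "q \<in> PK"
    | p d a where "X = Inl p" "Y = Inr (d, a)" "p \<in> PK" "d \<in> Dirs" "a \<in> A"
    | p d a where "Y = Inl p" "X = Inr (d, a)" "p \<in> PK" "d \<in> Dirs" "a \<in> A"
    | d a d' a' where "X = Inr (d, a)" "Y = Inr (d', a')" "d \<in> Dirs" "a \<in> A" "d' \<in> Dirs" "a' \<in> A"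
    using assms by (auto simp: ext_pts_def)
  then show ?thesis
  proof cases
    case 1
    then obtain g where "g \<in> LK" "IK p g" "IK q g" using K_join by blast
    then show ?thesis using 1 by (intro bexI[of _ "Inl g"]) (auto simp: ext_lines_def)
  next
    case 2 then show ?thesis using ex1_ext_line_Inl_Inr by blast
  next
    case 3 then show ?thesis using ex1_ext_line_Inl_Inr by blast
  next
    case 4
    consider "d = d'" "a = a'" | "d = d'" "a \<noteq> a'" | "d \<noteq> d'" by blast
    then show ?thesis
    proof cases
      case 1
      then show ?thesis using 4 dline by (intro bexI[of _ "Inr a"]) (auto simp: ext_lines_def)
    next
      case 2
      then show ?thesis using two_ext_lines_Inr_same_dir[of d a a'] 4 by blast
    next
      case 3
      then show ?thesis using ex1_ext_line_Inr_Inr[of d d' a a'] 4 by blast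
    qed
  qed
qed

lemma ext_meet_Inl_Inl:
  assumes g: "g \<in> LK" and h: "h \<in> LK"
  shows "\<exists>X\<in>ext_pts. ext_inc X (Inl g) \<and> ext_inc X (Inl h)"
proof (cases "\<exists>p\<in>PK. IK p g \<and> IK p h")
  case True
  then obtain p where "p \<in> PK" "IK p g" "IK p h" by blast
  then show ?thesis by (intro bexI[of _ "Inl p"]) (auto simp: ext_pts_def)
next
  case False
  then have "apar (\<psi> g) (\<psi> h)" using psi_apar_if_disjoint g h by (simp add: apar_def)
  then have dd: "dir (\<psi> g) = dir (\<psi> h)" using dir_eq_iff_apar psi_in_AL g h by blast
  have dD: "dir (\<psi> g) \<in> Dirs" using dir_in_Dirs psi_in_AL g by blast
  have "\<exists>a\<in>A. AI a (far_line g) \<and> AI a (far_line h)"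
  proof (cases "\<psi> g = \<psi> h")
    case True
    then have "h \<in> pclass g" using two_common_points_if_not_pclass[of g h] g h False by (auto simp: pts_def)
    then have "far_line g = far_line h" using far_line_eq_iff g h True by simp
    moreover obtain a where "a \<in> apts (far_line g)" using two_points_on_line[OF far_line_in_AL[OF g]] by blast
    ultimately show ?thesis by (auto simp: apts_def)
  next
    case False
    then have "\<not> apar (far_line g) (far_line h)" using far_lines_not_apar g h dd by blast
    then show ?thesis using ex1_meet_if_not_apar far_line_in_AL g h by blast
  qed
  then obtain a where "a \<in> A" "AI a (far_line g)" "AI a (far_line h)" by blast
  then show ?thesis using dd dD by (intro bexI[of _ "Inr (dir (\<psi> g), a)"]) (auto simp: ext_pts_def)
qed

lemma ext_meet_Inl_Inr:
  assumes g: "g \<in> LK" and n: "n \<in> A"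
  shows "\<exists>X\<in>ext_pts. ext_inc X (Inl g) \<and> ext_inc X (Inr n)"
proof -
  define d where "d = dir (\<psi> g)"
  have d: "d \<in> Dirs" using dir_in_Dirs psi_in_AL g by (simp add: d_def)
  have "dir (far_line g) \<noteq> dir (dline d n)" using dir_far_line_neq g dir_dline d n by (simp add: d_def)
  then have "\<not> apar (far_line g) (dline d n)" using dir_eq_iff_apar far_line_in_AL g dline d n by blast
  then obtain a where "a \<in> A" "AI a (far_line g)" "AI a (dline d n)"
    using ex1_meet_if_not_apar far_line_in_AL g dline d n by blast
  then show ?thesis using d by (intro bexI[of _ "Inr (d, a)"]) (auto simp: ext_pts_def d_def)
qed

lemma ext_meet_Inr_Inr:
  assumes n: "n \<in> A" "n' \<in> A"
  shows "\<exists>X\<in>ext_pts. ext_inc X (Inr n) \<and> ext_inc X (Inr n')"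
proof (cases "n = n'")
  case True
  obtain d where d: "d \<in> Dirs" using card_Dirs by fastforce
  then show ?thesis using True n dline by (intro bexI[of _ "Inr (d, n)"]) (auto simp: ext_pts_def)
next
  case False
  then show ?thesis using ext_ln_nb_Inr_Inr[OF n] unfolding ln_nb_def by blast
qed

lemma ext_meet:
  assumes "L \<in> ext_lines" "M \<in> ext_lines" shows "\<exists>X\<in>ext_pts. ext_inc X L \<and> ext_inc X M"
  using assms ext_meet_Inl_Inl ext_meet_Inl_Inr ext_meet_Inr_Inr
  by (auto simp: ext_lines_def) metis

lemma card_apts_far_line: "g \<in> LK \<Longrightarrow> card (apts (far_line g)) = t" using apts_card far_line_in_AL by blast
lemma card_apts_dline: "d \<in> Dirs \<Longrightarrow> n \<in> A \<Longrightarrow> card (apts (dline d n)) = t" using apts_card dline by blast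
lemma card_ext_line:
  assumes L: "L \<in> ext_lines"
  shows "finite {X\<in>ext_pts. ext_inc X L} \<and> card {X\<in>ext_pts. ext_inc X L} = t * (t + 1)"
proof (cases L)
  case (Inl g)
  then have g: "g \<in> LK" using L by (auto simp: ext_lines_def)
  have f1: "finite (pts g)" "finite ({dir (\<psi> g)} \<times> apts (far_line g))" using finite_pts g apts_finite far_line_in_AL by auto
  have cs: "card ({dir (\<psi> g)} \<times> apts (far_line g)) = t"
    using card_cartesian_product_singleton[of "dir (\<psi> g)" "apts (far_line g)"] card_apts_far_line g by simp
  have "card (Inl ` pts g \<union> Inr ` ({dir (\<psi> g)} \<times> apts (far_line g))) = t * t + t"
    using card_Inl_Un_Inr[OF f1] card_pts g cs by simp
  then show ?thesis using ext_pts_on_Inl[OF g] f1 Inl by (simp add: algebra_simps)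
next
  case (Inr n)
  then have n: "n \<in> A" using L by (auto simp: ext_lines_def)
  have fin: "finite (SIGMA d:Dirs. apts (dline d n))" using finite_Dirs apts_finite dline n by auto
  have "card (SIGMA d:Dirs. apts (dline d n)) = (\<Sum>d\<in>Dirs. t)"
    using card_SigmaI[OF finite_Dirs, of "\<lambda>d. apts (dline d n)"] apts_finite dline n card_apts_dline by simp
  then have "card (Inr ` (SIGMA d:Dirs. apts (dline d n))) = (t + 1) * t" using card_Dirs by (simp add: card_image)
  then show ?thesis using ext_pts_on_Inr[OF n] fin Inr by (simp add: algebra_simps)
qed

lemma card_ext_nb:
  assumes L: "L \<in> ext_lines" and X: "X \<in> ext_pts" "ext_inc X L"
  shows "card {Y\<in>ext_pts. ext_inc Y L \<and> pt_nb ext_pts ext_lines ext_inc X Y} = t"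
proof -
  have eq: "{Y\<in>ext_pts. ext_inc Y L \<and> pt_nb ext_pts ext_lines ext_inc X Y} = {Y\<in>ext_pts. ext_inc Y L \<and> ext_phi X = ext_phi Y}"
    using ext_pt_nb_iff X by auto
  show ?thesis
  proof (cases L)
    case (Inl g)
    then have g: "g \<in> LK" using L by (auto simp: ext_lines_def)
    show ?thesis
    proof (cases X)
      case (Inl p)
      then have p: "p \<in> pts g" using X Inl \<open>L = Inl g\<close> by (auto simp: ext_pts_def pts_def)
      have "{Y\<in>ext_pts. ext_inc Y L \<and> ext_phi X = ext_phi Y} = Inl ` {q\<in>pts g. \<phi> q = \<phi> p}"
        using \<open>L = Inl g\<close> Inl by (auto simp: ext_pts_def pts_def elim: ext_inc.elims)
      then show ?thesis using eq card_nb_on_line[OF g p] by (simp add: card_image)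
    next
      case (Inr c)
      then obtain d a where da: "X = Inr (d, a)" by (cases c) auto
      then have dd: "d = dir (\<psi> g)" using X \<open>L = Inl g\<close> by auto
      have "{Y\<in>ext_pts. ext_inc Y L \<and> ext_phi X = ext_phi Y} = Inr ` ({d} \<times> apts (far_line g))"
        using \<open>L = Inl g\<close> da dd dir_in_Dirs psi_in_AL g by (auto simp: ext_pts_def apts_def elim: ext_inc.elims)
      moreover have "card ({d} \<times> apts (far_line g)) = t"
        using card_cartesian_product_singleton[of d "apts (far_line g)"] card_apts_far_line g by simp
      ultimately show ?thesis using eq by (simp add: card_image)
    qed
  next
    case (Inr n)
    then have n: "n \<in> A" using L by (auto simp: ext_lines_def)
    obtain d a where da: "X = Inr (d, a)" "d \<in> Dirs" using X Inr by (cases X) (auto simp: ext_pts_def)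
    have "{Y\<in>ext_pts. ext_inc Y L \<and> ext_phi X = ext_phi Y} = Inr ` ({d} \<times> apts (dline d n))"
      using Inr da by (auto simp: ext_pts_def apts_def elim: ext_inc.elims)
    moreover have "card ({d} \<times> apts (dline d n)) = t"
      using card_cartesian_product_singleton[of d "apts (dline d n)"] card_apts_dline[OF da(2) n] by simp
    ultimately show ?thesis using eq by (simp add: card_image)
  qed
qed

lemma ext_phi_image: "ext_phi ` ext_pts = cl_pts"
proof
  show "ext_phi ` ext_pts \<subseteq> cl_pts" using phi_in_A by (auto simp: ext_pts_def cl_pts_def)
  show "cl_pts \<subseteq> ext_phi ` ext_pts"
  proof
    fix z assume "z \<in> cl_pts"
    then consider x where "z = Inl x" "x \<in> A" | d where "z = Inr d" "d \<in> Dirs" by (auto simp: cl_pts_def)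
    then show "z \<in> ext_phi ` ext_pts"
    proof cases
      case 1
      then obtain p where "p \<in> PK" "\<phi> p = x" using phi_onto by auto
      then show ?thesis using 1 by (intro image_eqI[of _ _ "Inl p"]) (auto simp: ext_pts_def)
    next
      case 2
      obtain a where "a \<in> A" using exists_point by blast
      then show ?thesis using 2 by (intro image_eqI[of _ _ "Inr (d, a)"]) (auto simp: ext_pts_def)
    qed
  qed
qed

lemma ext_psi_image: "ext_psi ` ext_lines = cl_lines"
proof
  show "ext_psi ` ext_lines \<subseteq> cl_lines" using psi_in_AL by (auto simp: ext_lines_def cl_lines_def)
  show "cl_lines \<subseteq> ext_psi ` ext_lines"
  proof
    fix z assume "z \<in> cl_lines"
    then consider m where "z = Inl m" "m \<in> AL" | "z = Inr ()" by (auto simp: cl_lines_def)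
    then show "z \<in> ext_psi ` ext_lines"
    proof cases
      case 1
      then obtain g where "g \<in> LK" "\<psi> g = m" using psi_onto by auto
      then show ?thesis using 1 by (intro image_eqI[of _ _ "Inl g"]) (auto simp: ext_lines_def)
    next
      case 2
      obtain a where "a \<in> A" using exists_point by blast
      then show ?thesis using 2 by (intro image_eqI[of _ _ "Inr a"]) (auto simp: ext_lines_def)
    qed
  qed
qed

lemma cl_inc_ext_phi_psi:
  assumes "X \<in> ext_pts" "L \<in> ext_lines" "ext_inc X L" shows "cl_inc (ext_phi X) (ext_psi L)"
proof (cases L)
  case (Inl g)
  then have g: "g \<in> LK" using assms(2) by (auto simp: ext_lines_def)
  show ?thesis
  proof (cases X)
    case (Inl p) then show ?thesis using assms \<open>L = Inl g\<close> inc_phi_psi g by (auto simp: ext_pts_def)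
  next
    case (Inr c)
    then obtain d a where "X = Inr (d, a)" by (cases c) auto
    then show ?thesis using assms(3) \<open>L = Inl g\<close> in_dir[OF psi_in_AL[OF g]] by auto
  qed
next
  case (Inr n)
  then show ?thesis using assms(3) by (cases X) auto
qed

lemma ext_PH_plane: "PH_plane ext_pts ext_lines ext_inc"
  by (rule PH_planeI[OF _ _ proj_plane_closure ext_phi_image ext_psi_image])
    (use ext_join ext_meet cl_inc_ext_phi_psi ext_pt_nb_iff ext_ln_nb_iff in auto)

lemma ext_tr_PH_plane: "tr_PH_plane t t ext_pts ext_lines ext_inc"
  unfolding tr_PH_plane_def using ext_PH_plane card_ext_line card_ext_nb by auto

definition "ext_nbhd = Inr ` A"

lemma line_nbhd_ext_nbhd: "line_nbhd ext_pts ext_lines ext_inc ext_nbhd"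
proof -
  obtain n0 where n0: "n0 \<in> A" using exists_point by blast
  have "ext_nbhd = {h\<in>ext_lines. ln_nb ext_pts ext_lines ext_inc (Inr n0) h}"
  proof
    show "ext_nbhd \<subseteq> {h\<in>ext_lines. ln_nb ext_pts ext_lines ext_inc (Inr n0) h}"
      using ext_ln_nb_Inr_Inr n0 by (auto simp: ext_nbhd_def ext_lines_def)
    show "{h\<in>ext_lines. ln_nb ext_pts ext_lines ext_inc (Inr n0) h} \<subseteq> ext_nbhd"
    proof
      fix h assume h: "h \<in> {h\<in>ext_lines. ln_nb ext_pts ext_lines ext_inc (Inr n0) h}"
      show "h \<in> ext_nbhd"
      proof (cases h)
        case (Inl g)
        then have "g \<in> LK" using h by (auto simp: ext_lines_def)
        then show ?thesis
          using not_ext_ln_nb_Inl_Inr[of g n0] ln_nb_sym[of ext_pts ext_lines ext_inc "Inr n0" "Inl g"] n0 h Inl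
          by auto
      next
        case (Inr n) then show ?thesis using h by (auto simp: ext_nbhd_def ext_lines_def)
      qed
    qed
  qed
  then show ?thesis unfolding line_nbhd_def using n0 by (auto simp: ext_lines_def)
qed

lemma ext_restriction:
  "{p\<in>ext_pts. \<forall>g\<in>ext_nbhd. \<not> ext_inc p g} = Inl ` PK" "ext_lines - ext_nbhd = Inl ` LK"
proof -
  show "ext_lines - ext_nbhd = Inl ` LK" by (auto simp: ext_lines_def ext_nbhd_def)
  show "{p\<in>ext_pts. \<forall>g\<in>ext_nbhd. \<not> ext_inc p g} = Inl ` PK"
  proof
    show "Inl ` PK \<subseteq> {p\<in>ext_pts. \<forall>g\<in>ext_nbhd. \<not> ext_inc p g}"
      by (auto simp: ext_pts_def ext_nbhd_def)
    show "{p\<in>ext_pts. \<forall>g\<in>ext_nbhd. \<not> ext_inc p g} \<subseteq> Inl ` PK"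
    proof
      fix X assume X: "X \<in> {p\<in>ext_pts. \<forall>g\<in>ext_nbhd. \<not> ext_inc p g}"
      show "X \<in> Inl ` PK"
      proof (cases X)
        case (Inl p) then show ?thesis using X by (auto simp: ext_pts_def)
      next
        case (Inr c)
        then obtain d a where da: "X = Inr (d, a)" "d \<in> Dirs" "a \<in> A" using X by (auto simp: ext_pts_def)
        then have "ext_inc X (Inr a)" using dline by simp
        then show ?thesis using X da by (auto simp: ext_nbhd_def)
      qed
    qed
  qed
qed

lemma inc_iso_ext_restriction:
  "inc_iso {p\<in>ext_pts. \<forall>g\<in>ext_nbhd. \<not> ext_inc p g} (ext_lines - ext_nbhd) ext_inc PK LK IK"
  unfolding ext_restriction inc_iso_def
proof (intro exI conjI)
  show "bij_betw projl (Inl ` PK) PK" by (rule bij_betw_imageI) (auto simp: inj_on_def image_image)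
  show "bij_betw projl (Inl ` LK) LK" by (rule bij_betw_imageI) (auto simp: inj_on_def image_image)
  show "\<forall>p\<in>Inl ` PK. \<forall>g\<in>Inl ` LK. ext_inc p g = IK (projl p) (projl g)" by auto
qed

end

lemma tr_AH_plane_epi:
  fixes PK :: "'a set" and LK :: "'b set"
  assumes "t \<ge> 2" "tr_AH_plane t t PK LK IK"
  shows "\<exists>A AL AI \<phi> \<psi>. tt_AH_plane_epi A AL AI t PK LK IK \<phi> \<psi>"
proof -
  note H = assms(2)[unfolded tr_AH_plane_def AH_plane_def]
  obtain A AL AI and \<phi> :: "'a \<Rightarrow> 'a" and \<psi> :: "'b \<Rightarrow> 'b"
    where "affine_plane A AL AI" "\<phi> ` PK = A" "\<psi> ` LK = AL"
      "\<forall>p\<in>PK. \<forall>g\<in>LK. IK p g \<longrightarrow> AI (\<phi> p) (\<psi> g)"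
      "\<forall>p\<in>PK. \<forall>q\<in>PK. \<phi> p = \<phi> q \<longleftrightarrow> pt_nb PK LK IK p q"
      "\<forall>g\<in>LK. \<forall>h\<in>LK. ln_nb PK LK IK g h \<longrightarrow> \<psi> g = \<psi> h"
      "\<forall>g\<in>LK. \<forall>h\<in>LK. \<not> (\<exists>p\<in>PK. IK p g \<and> IK p h) \<longrightarrow> aff_parallel A AI (\<psi> g) (\<psi> h)"
    using conjunct2[OF conjunct1[OF H]] by (elim exE conjE) blast
  then have "tt_AH_plane_epi A AL AI t PK LK IK \<phi> \<psi>"
    using assms(1) H by (simp add: tt_AH_plane_epi_def tt_AH_plane_epi_axioms_def affine_incidence_def)
  then show ?thesis by blast
qed

theorem mainTheorem4:
  fixes t :: nat and PK :: "'a set" and LK :: "'b set" and IK :: "'a \<Rightarrow> 'b \<Rightarrow> bool"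
  assumes "t \<ge> 2"
    and "tr_AH_plane t t PK LK IK"
  shows "\<exists>(PH :: ('a + nat) set) (LH :: ('b + nat) set) (IH :: 'a + nat \<Rightarrow> 'b + nat \<Rightarrow> bool) N.
           tr_PH_plane t t PH LH IH \<and> line_nbhd PH LH IH N \<and>
           inc_iso {p\<in>PH. \<forall>g\<in>N. \<not> IH p g} (LH - N) IH PK LK IK"
proof -
  obtain A AL AI \<phi> \<psi> where "tt_AH_plane_epi A AL AI t PK LK IK \<phi> \<psi>"
    using tr_AH_plane_epi assms by blast
  then interpret K: tt_AH_plane_epi A AL AI t PK LK IK \<phi> \<psi> .
  obtain e1 :: "'b set \<times> 'a \<Rightarrow> nat" where e1: "inj_on e1 (K.Dirs \<times> A)"
    using finite_imp_inj_to_nat_seg K.finite_Dirs K.finite_points by (metis finite_SigmaI)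
  obtain e2 :: "'a \<Rightarrow> nat" where e2: "inj_on e2 A"
    using finite_imp_inj_to_nat_seg K.finite_points by metis
  interpret T: incidence_transfer K.ext_pts K.ext_lines K.ext_inc "map_sum id e1" "map_sum id e2"
    by unfold_locales (use inj_on_map_sum_id e1 e2 in \<open>simp_all add: K.ext_pts_def K.ext_lines_def\<close>)
  show ?thesis
    using T.extension_image[OF K.ext_tr_PH_plane K.line_nbhd_ext_nbhd K.inc_iso_ext_restriction]
    by blast
qed

end
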